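(* Let $\mathcal A\subseteq E^\infty$, let $V\subseteq E$ be a block subspace, $\vec v$ a finite block sequence and $T$ a $(V,\vec v)$-rule, and suppose that for every block subspace $W\subseteq V$, player I has no strategy in $B^T_W(\vec v)$ to play in $\mathcal A$. Then there are a block subspace $X\subseteq V$ and an $(X,\vec v)$-rule $S\subseteq T$ such that $[S]\cap{\rm Int}(\mathcal A)=\emptyset$ and, for every block subspace $W\subseteq X$, player I has no strategy in $B^S_W(\vec v)$ to play in $\mathcal A$.
   Context: Fix a countable field $\mathfrak F$ and let $E$ be the countable-dimensional $\mathfrak F$-vector space with basis $(e_n)$. For non-zero $x=\sum a_ne_n$, ${\rm supp}\,x=\{n:a_n\neq0\}$. A block sequence is a sequence of non-zero vectors with $\max{\rm supp}\,x_n<\min{\rm supp}\,x_{n+1}$. "Subspace" means an infinite-dimensional block subspace of $E$. For a subspace $X$, $X[k]=\{x\in X\setminus\{0\}:k<\min{\rm supp}\,x\}$. $E^\infty=E^{\mathbb N}$ with the product of discrete topologies; ${\rm Int}$ denotes interior; $E^{<\infty}$ is the set of finite block sequences; $\hat{}$ is concatenation; $T_{\vec x}=\{\vec y:\vec x\,\hat{}\,\vec y\in T\}$; $[T]=\{(x_n)\in E^\infty:\text{for infinitely many } m,\ (x_0,\dots,x_m)\in T\}$. Game $B_V(\vec v)$: if $|\vec v|$ is even: II plays a subspace $Z_0\subseteq V$; I plays non-zero $x_0\in Z_0$ and $n_0\in\mathbb N$; II plays non-zero $y_0\in V[n_0]$ and a subspace $Z_1\subseteq V$; I plays $x_1\in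 Z_1$, $n_1$; II plays $y_1\in V[n_1]$, $Z_2$; etc.; outcome $\vec v\,\hat{}\,(x_0,y_0,x_1,y_1,\dots)$. If $|\vec v|$ is odd: I plays $n_0$; II plays $y_0\in V[n_0]$ and $Z_0\subseteq V$; I plays $x_0\in Z_0$ and $n_1$; II plays $y_1\in V[n_1]$ and $Z_1$; etc.; outcome $\vec v\,\hat{}\,(y_0,x_0,y_1,x_1,\dots)$. A $(V,\vec v)$-rule is a set $T\subseteq E^{<\infty}$ with $\vec v\in T$ such that: (i) if $\vec y\in T$, $|\vec y|$ odd, then for every subspace $Z\subseteq V$ there is $z\in Z$ with $\vec y\,\hat{}\,z\in T$; (ii) if $\vec y\in T$, $|\vec y|$ even, then there is $n$ with $\vec y\,\hat{}\,z\in T$ for all $z\in V[n]$. The $T$-induced subgame $B^T_V(\vec v)$ is played as $B_V(\vec v)$ with the additional requirement that every position, i.e. the finite sequence of vectors played so far listed in the order they appear in the outcome, belongs to $T_{\vec v}$. A strategy to play in $\mathcal A$ is one all of whose outcomes lie in $\mathcal A$. *)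

theory Defs
  imports Main "HOL-Library.Poly_Mapping" "HOL-Library.Countable"
begin

text \<open>E = finitely supported vectors over a field 'f with basis (e_n); a vector x is a
 poly_mapping nat =>0 'f, Poly_Mapping.lookup x n is the n-th coordinate, keys x = supp x.\<close>

type_synonym 'f vec = "nat \<Rightarrow>\<^sub>0 'f"

definition block_seq :: "(nat \<Rightarrow> 'f::zero vec) \<Rightarrow> bool" where
  "block_seq b \<longleftrightarrow> (\<forall>n. b n \<noteq> 0) \<and> (\<forall>n. Max (Poly_Mapping.keys (b n)) < Min (Poly_Mapping.keys (b (Suc n))))"

definition block_list :: "'f::zero vec list \<Rightarrow> bool" where
  "block_list xs \<longleftrightarrow> (\<forall>x\<in>set xs. x \<noteq> 0) \<and>
     (\<forall>i. Suc i < length xs \<longrightarrow> Max (Poly_Mapping.keys (xs ! i)) < Min (Poly_Mapping.keys (xs ! Suc i)))"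

definition span_seq :: "(nat \<Rightarrow> 'f::field vec) \<Rightarrow> 'f vec set" where
  "span_seq b = {x. \<exists>n c. \<forall>k. Poly_Mapping.lookup x k = (\<Sum>i<n. c i * Poly_Mapping.lookup (b i) k)}"

definition block_subspace :: "'f::field vec set \<Rightarrow> bool" where
  "block_subspace X \<longleftrightarrow> (\<exists>b. block_seq b \<and> X = span_seq b)"

definition tail :: "'f::zero vec set \<Rightarrow> nat \<Rightarrow> 'f vec set" where
  "tail X k = {x \<in> X. x \<noteq> 0 \<and> k < Min (Poly_Mapping.keys x)}"

definition is_rule :: "'f::field vec set \<Rightarrow> 'f vec list \<Rightarrow> 'f vec list set \<Rightarrow> bool" where
  "is_rule V v T \<longleftrightarrow> v \<in> T \<and> (\<forall>y\<in>T. block_list y) \<and>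
     (\<forall>y\<in>T. odd (length y) \<longrightarrow>
        (\<forall>Z. block_subspace Z \<and> Z \<subseteq> V \<longrightarrow> (\<exists>z\<in>Z. y @ [z] \<in> T))) \<and>
     (\<forall>y\<in>T. even (length y) \<longrightarrow> (\<exists>n. \<forall>z\<in>tail V n. y @ [z] \<in> T))"

definition body :: "'a list set \<Rightarrow> (nat \<Rightarrow> 'a) set" where
  "body T = {s. infinite {m. map s [0..<Suc m] \<in> T}}"

text \<open>Interior in E^infinity with the product of discrete topologies.\<close>
definition seq_interior :: "(nat \<Rightarrow> 'a) set \<Rightarrow> (nat \<Rightarrow> 'a) set" where
  "seq_interior A = {s. \<exists>m. \<forall>t. (\<forall>i<m. t i = s i) \<longrightarrow> t \<in> A}"

text \<open>The stream of moves after v: if |v| even it is x0,y0,x1,y1,...; if odd it is y0,x0,y1,x1,...\<close>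
definition game_stream :: "bool \<Rightarrow> (nat \<Rightarrow> 'a) \<Rightarrow> (nat \<Rightarrow> 'a) \<Rightarrow> nat \<Rightarrow> 'a" where
  "game_stream ev xs ys j =
     (if ev then (if even j then xs (j div 2) else ys (j div 2))
            else (if even j then ys (j div 2) else xs (j div 2)))"

definition outcome :: "'a list \<Rightarrow> (nat \<Rightarrow> 'a) \<Rightarrow> nat \<Rightarrow> 'a" where
  "outcome v w i = (if i < length v then v ! i else w (i - length v))"

text \<open>A strategy of player I is given by two functions of II's previous moves
 (the y's and the Z's played so far), producing I's vector move and integer move.
 |v| even: round k: II has played Z_0..Z_k and y_0..y_(k-1); I plays x_k, n_k.
 |v| odd:  I plays n_k after II played y_0..y_(k-1), Z_0..Z_(k-1);
           I plays x_k after II played y_0..y_k, Z_0..Z_k.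
 The strategy plays in A in the T-induced game B^T_W(v) if, whenever II has moved legally
 so far, I's prescribed move is legal, and every fully legal play has outcome in A.
 Positions (vectors played so far, in outcome order) must belong to T_v.\<close>
definition I_strategy_in ::
  "'f::field vec list set \<Rightarrow> 'f vec set \<Rightarrow> 'f vec list \<Rightarrow> (nat \<Rightarrow> 'f vec) set
   \<Rightarrow> ('f vec list \<Rightarrow> 'f vec set list \<Rightarrow> 'f vec)
   \<Rightarrow> ('f vec list \<Rightarrow> 'f vec set list \<Rightarrow> nat) \<Rightarrow> bool" where
  "I_strategy_in T W v A \<sigma>x \<sigma>n \<longleftrightarrow>
    (\<forall>(ys :: nat \<Rightarrow> 'f vec) (Zs :: nat \<Rightarrow> 'f vec set).
      (if even (length v) then
        (let xs = (\<lambda>k. \<sigma>x (map ys [0..<k]) (map Zs [0..<Suc k]));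
             ns = (\<lambda>k. \<sigma>n (map ys [0..<k]) (map Zs [0..<Suc k]));
             w = game_stream True xs ys;
             pos = (\<lambda>j. v @ map w [0..<j]);
             IIok = (\<lambda>k. block_subspace (Zs k) \<and> Zs k \<subseteq> W \<and>
                        (0 < k \<longrightarrow> ys (k - 1) \<in> tail W (ns (k - 1)) \<and> pos (2 * k) \<in> T));
             Iok = (\<lambda>k. xs k \<in> Zs k \<and> xs k \<noteq> 0 \<and> pos (2 * k + 1) \<in> T)
         in (\<forall>k. (\<forall>j\<le>k. IIok j) \<longrightarrow> Iok k) \<and> ((\<forall>k. IIok k) \<longrightarrow> outcome v w \<in> A))
      else
        (let xs = (\<lambda>k. \<sigma>x (map ys [0..<Suc k]) (map Zs [0..<Suc k]));
             ns = (\<lambda>k. \<sigma>n (map ys [0..<k]) (map Zs [0..<k]));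
             w = game_stream False xs ys;
             pos = (\<lambda>j. v @ map w [0..<j]);
             IIok = (\<lambda>k. ys k \<in> tail W (ns k) \<and> pos (2 * k + 1) \<in> T \<and>
                        block_subspace (Zs k) \<and> Zs k \<subseteq> W);
             Iok = (\<lambda>k. 0 < k \<longrightarrow> xs (k - 1) \<in> Zs (k - 1) \<and> xs (k - 1) \<noteq> 0 \<and> pos (2 * k) \<in> T)
         in (\<forall>k. (\<forall>j<k. IIok j) \<longrightarrow> Iok k) \<and> ((\<forall>k. IIok k) \<longrightarrow> outcome v w \<in> A))))"

definition I_has_strategy ::
  "'f::field vec list set \<Rightarrow> 'f vec set \<Rightarrow> 'f vec list \<Rightarrow> (nat \<Rightarrow> 'f vec) set \<Rightarrow> bool" where
  "I_has_strategy T W v A \<longleftrightarrow> (\<exists>\<sigma>x \<sigma>n. I_strategy_in T W v A \<sigma>x \<sigma>n)"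

end

theory Submission
  imports Defs "HOL-Library.Countable_Set" "HOL-Library.Sublist"
begin

(* A position p above v is winning for I in B^T_W if I has a quasi-strategy from p: a subtree
   of T above p, all of whose branches lie in A, inside which I can always stay.  By countability of the positions and two fusion arguments
   (section 1) we shrink V to X0 deciding every position (winning in some subspace of X0
   implies winning in X0), and then to X deciding, for each position p, whether the vectors
   leading from p to a winning position are eventually avoided by X or meet every subspace
   of X.  The pruned rule S consists of the positions of T above v that are not winning in
   X0 (section 5): it is an (X,v)-rule; a branch of S through Int(A) would reach a trivially
   winning position; and a strategy of I in B^S_W(v), combined with the quasi-strategies at
   the positions where a play leaves S (section 4), would be a strategy in B^T_W(v). *)

section \<open>Block sequences and block subspaces\<close>

lemma min_le_max_keys: "(x::'f::zero vec) \<noteq> 0 \<Longrightarrow> Min (Poly_Mapping.keys x) \<le> Max (Poly_Mapping.keys x)"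
  by (simp add: Min_in)

lemma block_seq_lt:
  assumes "block_seq b" "i < j"
  shows "Max (Poly_Mapping.keys (b i)) < Min (Poly_Mapping.keys (b j))"
  using assms(2)
proof (induction j)
  case 0 then show ?case by simp
next
  case (Suc j)
  have bs: "\<forall>n. b n \<noteq> 0" "\<forall>n. Max (Poly_Mapping.keys (b n)) < Min (Poly_Mapping.keys (b (Suc n)))"
    using assms(1) unfolding block_seq_def by auto
  show ?case
  proof (cases "i = j")
    case True then show ?thesis using bs by simp
  next
    case False
    then have "Max (Poly_Mapping.keys (b i)) < Min (Poly_Mapping.keys (b j))" using Suc by simp
    also have "\<dots> \<le> Max (Poly_Mapping.keys (b j))" using bs min_le_max_keys by blast
    also have "\<dots> < Min (Poly_Mapping.keys (b (Suc j)))" using bs by simp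
    finally show ?thesis .
  qed
qed

lemma max_keys_mono:
  assumes "block_seq d" "j \<le> i"
  shows "Max (Poly_Mapping.keys (d j)) \<le> Max (Poly_Mapping.keys (d i))"
proof (cases "j = i")
  case False
  then have "j < i" using assms by simp
  have "d i \<noteq> 0" using assms(1) unfolding block_seq_def by auto
  then show ?thesis using block_seq_lt[OF assms(1) \<open>j<i\<close>] min_le_max_keys[of "d i"] by linarith
qed simp

lemma block_seq_min_ge: "block_seq b \<Longrightarrow> n \<le> Min (Poly_Mapping.keys (b n))"
proof (induction n)
  case (Suc n)
  have "b n \<noteq> 0" using Suc.prems unfolding block_seq_def by auto
  then have "Min (Poly_Mapping.keys (b n)) \<le> Max (Poly_Mapping.keys (b n))" by (rule min_le_max_keys)
  also have "\<dots> < Min (Poly_Mapping.keys (b (Suc n)))" using Suc.prems unfolding block_seq_def by auto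
  finally show ?case using Suc by simp
qed simp

lemma block_seq_disj:
  assumes "block_seq b" "k \<in> Poly_Mapping.keys (b j)" "l \<noteq> j"
  shows "Poly_Mapping.lookup (b l) k = 0"
proof (rule ccontr)
  assume "Poly_Mapping.lookup (b l) k \<noteq> 0"
  then have kl: "k \<in> Poly_Mapping.keys (b l)" by (simp add: in_keys_iff)
  consider "l < j" | "j < l" using assms(3) by linarith
  then show False
  proof cases
    case 1
    have "k \<le> Max (Poly_Mapping.keys (b l))" using kl by simp
    also have "\<dots> < Min (Poly_Mapping.keys (b j))" using block_seq_lt[OF assms(1) 1] .
    also have "\<dots> \<le> k" using assms(2) by simp
    finally show False by simp
  next
    case 2
    have "k \<le> Max (Poly_Mapping.keys (b j))" using assms(2) by simp
    also have "\<dots> < Min (Poly_Mapping.keys (b l))" using block_seq_lt[OF assms(1) 2] .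
    also have "\<dots> \<le> k" using kl by simp
    finally show False by simp
  qed
qed

text \<open>Since the supports of a block sequence are disjoint, on the support of b j a linear
  combination of the b i only sees its j-th coefficient.\<close>
lemma span_lookup_key:
  fixes b :: "nat \<Rightarrow> 'f::field vec"
  assumes "block_seq b" "k \<in> Poly_Mapping.keys (b j)"
    and "\<forall>k. Poly_Mapping.lookup x k = (\<Sum>i<n. c i * Poly_Mapping.lookup (b i) k)"
  shows "Poly_Mapping.lookup x k = (if j < n then c j * Poly_Mapping.lookup (b j) k else 0)"
proof -
  have "Poly_Mapping.lookup x k = (\<Sum>i<n. c i * Poly_Mapping.lookup (b i) k)" using assms(3) by simp
  also have "\<dots> = (\<Sum>i<n. if i = j then c j * Poly_Mapping.lookup (b j) k else 0)"
    by (rule sum.cong[OF refl]) (use block_seq_disj[OF assms(1,2)] in auto)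
  also have "\<dots> = (if j < n then c j * Poly_Mapping.lookup (b j) k else 0)"
    by (simp add: sum.delta)
  finally show ?thesis .
qed

lemma keys_span_elem:
  fixes b :: "nat \<Rightarrow> 'f::field vec"
  assumes "\<forall>k. Poly_Mapping.lookup x k = (\<Sum>i<n. c i * Poly_Mapping.lookup (b i) k)"
    and "k \<in> Poly_Mapping.keys x"
  shows "\<exists>i<n. k \<in> Poly_Mapping.keys (b i)"
proof (rule ccontr)
  assume "\<not> ?thesis"
  then have "\<forall>i<n. Poly_Mapping.lookup (b i) k = 0" by (simp add: in_keys_iff)
  then have "(\<Sum>i<n. c i * Poly_Mapping.lookup (b i) k) = 0" by (intro sum.neutral) auto
  then show False using assms by (simp add: in_keys_iff)
qed

lemma span_zero: "0 \<in> span_seq b"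
  unfolding span_seq_def by (rule CollectI, rule exI[of _ 0]) simp

lemma span_gen: "b i \<in> span_seq (b::nat \<Rightarrow> 'f::field vec)"
  unfolding span_seq_def
  by (rule CollectI, rule exI[of _ "Suc i"], rule exI[of _ "\<lambda>j. if j = i then 1 else 0"])
     (simp add: if_distrib sum.delta cong: if_cong)

text \<open>A span is closed under finite linear combinations: substitute the representations of
  the d j and collect the coefficients of each b i.\<close>
lemma span_closure:
  fixes b d :: "nat \<Rightarrow> 'f::field vec"
  assumes d: "\<forall>j<n. c j \<noteq> 0 \<longrightarrow> d j \<in> span_seq b"
    and x: "\<forall>k. Poly_Mapping.lookup x k = (\<Sum>j<n. c j * Poly_Mapping.lookup (d j) k)"
  shows "x \<in> span_seq b"
proof -
  have "\<forall>j. \<exists>N C. j < n \<and> c j \<noteq> 0 \<longrightarrow>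
          (\<forall>k. Poly_Mapping.lookup (d j) k = (\<Sum>i<N. C i * Poly_Mapping.lookup (b i) k))"
    using d unfolding span_seq_def by blast
  then obtain N C where NC: "\<And>j k. j < n \<Longrightarrow> c j \<noteq> 0 \<Longrightarrow>
      Poly_Mapping.lookup (d j) k = (\<Sum>i<N j. C j i * Poly_Mapping.lookup (b i) k)"
    by metis
  define M where "M = (\<Sum>j<n. N j)"
  have NM: "j < n \<Longrightarrow> N j \<le> M" for j
    unfolding M_def by (rule member_le_sum) auto
  define c' where "c' i = (\<Sum>j<n. c j * (if i < N j then C j i else 0))" for i
  have coeff: "(\<Sum>i<M. c j * ((if i < N j then C j i else 0) * Poly_Mapping.lookup (b i) k))
      = c j * Poly_Mapping.lookup (d j) k" if j: "j < n" for j k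
  proof (cases "c j = 0")
    case False
    have "(\<Sum>i<M. c j * ((if i < N j then C j i else 0) * Poly_Mapping.lookup (b i) k))
        = c j * (\<Sum>i<M. (if i < N j then C j i * Poly_Mapping.lookup (b i) k else 0))"
      by (subst sum_distrib_left) (rule sum.cong, auto)
    also have "(\<Sum>i<M. (if i < N j then C j i * Poly_Mapping.lookup (b i) k else 0))
        = (\<Sum>i\<in>{..<M} \<inter> {i. i < N j}. C j i * Poly_Mapping.lookup (b i) k)"
      by (simp add: sum.inter_restrict)
    also have "{..<M} \<inter> {i. i < N j} = {..<N j}" using NM[OF j] by auto
    finally show ?thesis using NC[OF j False] by simp
  qed simp
  have "Poly_Mapping.lookup x k = (\<Sum>i<M. c' i * Poly_Mapping.lookup (b i) k)" for k
  proof -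
    have "(\<Sum>i<M. c' i * Poly_Mapping.lookup (b i) k)
        = (\<Sum>i<M. \<Sum>j<n. c j * ((if i < N j then C j i else 0) * Poly_Mapping.lookup (b i) k))"
      unfolding c'_def by (simp add: sum_distrib_right mult.assoc)
    also have "\<dots> = (\<Sum>j<n. \<Sum>i<M. c j * ((if i < N j then C j i else 0) * Poly_Mapping.lookup (b i) k))"
      by (rule sum.swap)
    also have "\<dots> = (\<Sum>j<n. c j * Poly_Mapping.lookup (d j) k)"
      using coeff by (intro sum.cong) auto
    finally show ?thesis using x by simp
  qed
  then show ?thesis unfolding span_seq_def by blast
qed

lemma in_span_block_subspace:
  fixes X :: "'f::field vec set" and n :: nat
  assumes "block_subspace X" "\<forall>j<n. c j \<noteq> 0 \<longrightarrow> d j \<in> X"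
    and "\<forall>k. Poly_Mapping.lookup x k = (\<Sum>j<n. c j * Poly_Mapping.lookup (d j) k)"
  shows "x \<in> X"
proof -
  obtain b where "block_seq b" "X = span_seq b" using assms(1) unfolding block_subspace_def by blast
  then show ?thesis using span_closure[of n c d b x] assms(2,3) by simp
qed

lemma block_subspace_zero: "block_subspace X \<Longrightarrow> 0 \<in> X"
  unfolding block_subspace_def using span_zero by blast

text \<open>Every block subspace contains a block subspace all of whose non-zero vectors are
  supported beyond a given M (span the tail of the defining block sequence).\<close>
lemma block_subspace_beyond:
  fixes Z :: "'f::field vec set"
  assumes "block_subspace Z"
  shows "\<exists>Z'. block_subspace Z' \<and> Z' \<subseteq> Z \<and> (\<forall>x\<in>Z'. x \<noteq> 0 \<longrightarrow> M < Min (Poly_Mapping.keys x))"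
proof -
  obtain b where b: "block_seq b" "Z = span_seq b" using assms unfolding block_subspace_def by blast
  define b' where "b' i = b (i + Suc M)" for i
  have bs': "block_seq b'" using b(1) unfolding block_seq_def b'_def by simp
  have sub: "span_seq b' \<subseteq> Z"
  proof
    fix x assume "x \<in> span_seq b'"
    then obtain n c where x: "\<forall>k. Poly_Mapping.lookup x k = (\<Sum>i<n. c i * Poly_Mapping.lookup (b' i) k)"
      unfolding span_seq_def by blast
    show "x \<in> Z" unfolding b(2)
      by (rule span_closure[OF _ x]) (simp add: b'_def span_gen)
  qed
  have big: "M < Min (Poly_Mapping.keys x)" if xin: "x \<in> span_seq b'" and xnz: "x \<noteq> 0" for x
  proof -
    obtain n c where x: "\<forall>k. Poly_Mapping.lookup x k = (\<Sum>i<n. c i * Poly_Mapping.lookup (b' i) k)"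
      using xin unfolding span_seq_def by blast
    have "Min (Poly_Mapping.keys x) \<in> Poly_Mapping.keys x" using xnz by (simp add: Min_in)
    then obtain i where ki: "Min (Poly_Mapping.keys x) \<in> Poly_Mapping.keys (b (i + Suc M))"
      using keys_span_elem[OF x] unfolding b'_def by blast
    have "M < i + Suc M" by simp
    also have "\<dots> \<le> Min (Poly_Mapping.keys (b (i + Suc M)))" by (rule block_seq_min_ge[OF b(1)])
    also have "\<dots> \<le> Min (Poly_Mapping.keys x)" using ki by simp
    finally show ?thesis .
  qed
  show ?thesis
    by (rule exI[of _ "span_seq b'"]) (use bs' sub big in \<open>auto simp: block_subspace_def\<close>)
qed

lemma block_subspace_vector_beyond:
  fixes Z :: "'f::field vec set"
  assumes "block_subspace Z"
  shows "\<exists>x\<in>Z. x \<noteq> 0 \<and> M < Min (Poly_Mapping.keys x)"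
proof -
  obtain Z' where Z': "block_subspace Z'" "Z' \<subseteq> Z" "\<forall>x\<in>Z'. x \<noteq> 0 \<longrightarrow> M < Min (Poly_Mapping.keys x)"
    using block_subspace_beyond[OF assms] by blast
  obtain b where "block_seq b" "Z' = span_seq b" using Z'(1) unfolding block_subspace_def by blast
  then have "b 0 \<in> Z'" "b 0 \<noteq> 0" using span_gen unfolding block_seq_def by auto
  then show ?thesis using Z' by blast
qed

text \<open>Almost-inclusion: if Z is contained in Y up to a finite part (tail Z M \<subseteq> Y), then every
  block subspace of Z has a block subspace inside Y, and far-out vectors of Z lie far out in Y.\<close>
lemma block_subspace_inside:
  fixes Y :: "'f::field vec set"
  assumes "block_subspace Y" "block_subspace W" "W \<subseteq> Z" "tail Z M \<subseteq> Y"
  shows "\<exists>W'. block_subspace W' \<and> W' \<subseteq> W \<and> W' \<subseteq> Y"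
proof -
  obtain W' where W': "block_subspace W'" "W' \<subseteq> W" "\<forall>x\<in>W'. x \<noteq> 0 \<longrightarrow> M < Min (Poly_Mapping.keys x)"
    using block_subspace_beyond[OF assms(2)] by blast
  have "W' \<subseteq> Y"
  proof
    fix x assume x: "x \<in> W'"
    show "x \<in> Y"
    proof (cases "x = 0")
      case True then show ?thesis using block_subspace_zero[OF assms(1)] by simp
    next
      case False
      then have "x \<in> tail Z M" using x W' assms(3) unfolding tail_def by auto
      then show ?thesis using assms(4) by blast
    qed
  qed
  then show ?thesis using W' by blast
qed

lemma tail_inside: "tail Z M \<subseteq> Y \<Longrightarrow> tail Z (max n M) \<subseteq> tail Y n"
  unfolding tail_def by auto

text \<open>If the vectors d j with j > i all lie in the block subspace Y, then so does every vector
  of the span of d supported beyond d i: the coefficient of an earlier d j is read off at the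
  least key of d j, where such a vector vanishes.\<close>
lemma span_tail_inside:
  fixes d :: "nat \<Rightarrow> 'f::field vec"
  assumes bsd: "block_seq d" and Y: "block_subspace Y" and later: "\<And>j. i < j \<Longrightarrow> d j \<in> Y"
  shows "tail (span_seq d) (Max (Poly_Mapping.keys (d i))) \<subseteq> Y"
proof
  fix x assume "x \<in> tail (span_seq d) (Max (Poly_Mapping.keys (d i)))"
  then have xX: "x \<in> span_seq d" and xmin: "Max (Poly_Mapping.keys (d i)) < Min (Poly_Mapping.keys x)"
    unfolding tail_def by auto
  obtain n c where x: "\<forall>k. Poly_Mapping.lookup x k = (\<Sum>j<n. c j * Poly_Mapping.lookup (d j) k)"
    using xX unfolding span_seq_def by blast
  have "d j \<in> Y" if "j < n" "c j \<noteq> 0" for j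
  proof (cases "i < j")
    case False
    define k0 where "k0 = Min (Poly_Mapping.keys (d j))"
    have "d j \<noteq> 0" using bsd unfolding block_seq_def by blast
    then have k0: "k0 \<in> Poly_Mapping.keys (d j)" unfolding k0_def by (simp add: Min_in)
    have lk: "Poly_Mapping.lookup x k0 = c j * Poly_Mapping.lookup (d j) k0"
      using span_lookup_key[OF bsd k0 x] that by simp
    have "k0 \<le> Max (Poly_Mapping.keys (d j))" using k0 by simp
    also have "\<dots> \<le> Max (Poly_Mapping.keys (d i))" using max_keys_mono[OF bsd] False by simp
    also have "\<dots> < Min (Poly_Mapping.keys x)" by (rule xmin)
    finally have "k0 \<notin> Poly_Mapping.keys x" by (meson Min_le finite_keys leD)
    then have "Poly_Mapping.lookup x k0 = 0" by (simp add: in_keys_iff)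
    moreover have "Poly_Mapping.lookup (d j) k0 \<noteq> 0" using k0 by (simp add: in_keys_iff)
    ultimately have "c j = 0" using lk by simp
    then show ?thesis using that by simp
  qed (rule later)
  then show "x \<in> Y" using in_span_block_subspace[OF Y _ x] by blast
qed

text \<open>Diagonalisation: a decreasing sequence of block subspaces has a block subspace of the
  first one that is almost included in all of them.  Pick d i \<in> Xs i supported beyond d (i-1).\<close>
lemma diagonal_subspace:
  fixes Xs :: "nat \<Rightarrow> 'f::field vec set"
  assumes bsX: "\<And>i. block_subspace (Xs i)" and dec: "\<And>i. Xs (Suc i) \<subseteq> Xs i"
  shows "\<exists>X. block_subspace X \<and> X \<subseteq> Xs 0 \<and> (\<forall>i. \<exists>M. tail X M \<subseteq> Xs (Suc i))"
proof -
  have anti: "i \<le> j \<Longrightarrow> Xs j \<subseteq> Xs i" for i j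
    using lift_Suc_antimono_le[of Xs, OF dec] by blast
  define d where "d = rec_nat (SOME x. x \<in> Xs 0 \<and> x \<noteq> 0)
     (\<lambda>i x. SOME y. y \<in> Xs (Suc i) \<and> y \<noteq> 0 \<and> Max (Poly_Mapping.keys x) < Min (Poly_Mapping.keys y))"
  have d0: "d 0 \<in> Xs 0 \<and> d 0 \<noteq> 0"
  proof -
    have "\<exists>x. x \<in> Xs 0 \<and> x \<noteq> 0" using block_subspace_vector_beyond[OF bsX[of 0], of 0] by blast
    then show ?thesis unfolding d_def rec_nat_0_imp[OF refl] by (rule someI_ex)
  qed
  have dS: "d (Suc i) \<in> Xs (Suc i) \<and> d (Suc i) \<noteq> 0 \<and>
            Max (Poly_Mapping.keys (d i)) < Min (Poly_Mapping.keys (d (Suc i)))" for i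
  proof -
    have "\<exists>y. y \<in> Xs (Suc i) \<and> y \<noteq> 0 \<and> Max (Poly_Mapping.keys (d i)) < Min (Poly_Mapping.keys y)"
      using block_subspace_vector_beyond[OF bsX[of "Suc i"], of "Max (Poly_Mapping.keys (d i))"] by blast
    then show ?thesis unfolding d_def rec_nat_Suc_imp[OF refl] by (rule someI_ex)
  qed
  have din: "d i \<in> Xs i" and dnz: "d i \<noteq> 0" for i
    using d0 dS by (cases i; simp)+
  have bsd: "block_seq d" unfolding block_seq_def using dnz dS by blast
  have "span_seq d \<subseteq> Xs 0"
  proof
    fix x assume "x \<in> span_seq d"
    then obtain n c where x: "\<forall>k. Poly_Mapping.lookup x k = (\<Sum>j<n. c j * Poly_Mapping.lookup (d j) k)"
      unfolding span_seq_def by blast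
    show "x \<in> Xs 0" using in_span_block_subspace[OF bsX[of 0] _ x] din anti[of 0] by blast
  qed
  moreover have "tail (span_seq d) (Max (Poly_Mapping.keys (d i))) \<subseteq> Xs (Suc i)" for i
  proof (rule span_tail_inside[OF bsd bsX])
    fix j assume "i < j"
    then show "d j \<in> Xs (Suc i)" using din[of j] anti[of "Suc i" j] by auto
  qed
  ultimately show ?thesis using bsd unfolding block_subspace_def by blast
qed

text \<open>Fusion: if each of countably many properties Q i is dense (every block subspace has a
  block subspace with Q i) and stable under almost-inclusion, then some block subspace of X0
  has all of them: choose Xs (Suc i) \<subseteq> Xs i with Q i and diagonalise.\<close>
lemma fusion:
  fixes X0 :: "'f::field vec set" and Q :: "nat \<Rightarrow> 'f vec set \<Rightarrow> bool"
  assumes X0: "block_subspace X0"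
    and dense: "\<And>i Y. block_subspace Y \<Longrightarrow> \<exists>Y'. block_subspace Y' \<and> Y' \<subseteq> Y \<and> Q i Y'"
    and stable: "\<And>i Y Z M. Q i Y \<Longrightarrow> block_subspace Y \<Longrightarrow> block_subspace Z \<Longrightarrow> tail Z M \<subseteq> Y \<Longrightarrow> Q i Z"
  shows "\<exists>X. block_subspace X \<and> X \<subseteq> X0 \<and> (\<forall>i. Q i X)"
proof -
  define Xs where "Xs = rec_nat X0 (\<lambda>i Y. SOME Y'. block_subspace Y' \<and> Y' \<subseteq> Y \<and> Q i Y')"
  have Xs0: "Xs 0 = X0" unfolding Xs_def by simp
  have XsS: "Xs (Suc i) = (SOME Y'. block_subspace Y' \<and> Y' \<subseteq> Xs i \<and> Q i Y')" for i
    unfolding Xs_def by simp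
  have bsX: "block_subspace (Xs i)" for i
  proof (induction i)
    case 0 then show ?case using X0 Xs0 by simp
  next
    case (Suc i) then show ?case unfolding XsS using someI_ex[OF dense[OF Suc]] by blast
  qed
  have XsP: "Xs (Suc i) \<subseteq> Xs i \<and> Q i (Xs (Suc i))" for i
    unfolding XsS using someI_ex[OF dense[OF bsX[of i]]] by blast
  obtain X where X: "block_subspace X" "X \<subseteq> X0" and almost: "\<forall>i. \<exists>M. tail X M \<subseteq> Xs (Suc i)"
    using diagonal_subspace[of Xs] bsX XsP Xs0 by blast
  have "Q i X" for i
  proof -
    obtain M where "tail X M \<subseteq> Xs (Suc i)" using almost by blast
    then show ?thesis using stable[of i "Xs (Suc i)" X M] XsP[of i] bsX[of "Suc i"] X(1) by blast
  qed
  then show ?thesis using X by blast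
qed

text \<open>Positions of the game are finite sequences of vectors; over a countable field there
  are only countably many of them, which is what makes the fusion arguments applicable.\<close>
lemma countable_vec: "countable (UNIV :: ('f::{zero,countable}) vec set)"
proof -
  define N :: "'f vec \<Rightarrow> nat" where "N x = (if Poly_Mapping.keys x = {} then 0 else Suc (Max (Poly_Mapping.keys x)))" for x
  define f :: "'f vec \<Rightarrow> 'f list" where "f x = map (Poly_Mapping.lookup x) [0..<N x]" for x
  have big: "Poly_Mapping.lookup x k = 0" if "N x \<le> k" for x k
  proof -
    have "k \<notin> Poly_Mapping.keys x"
    proof
      assume kx: "k \<in> Poly_Mapping.keys x"
      then have "k \<le> Max (Poly_Mapping.keys x)" by simp
      moreover have "Suc (Max (Poly_Mapping.keys x)) \<le> k" using that kx unfolding N_def by (auto split: if_splits)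
      ultimately show False by simp
    qed
    then show ?thesis by (simp add: in_keys_iff)
  qed
  have "inj f"
  proof (rule injI)
    fix x y assume fe: "f x = f y"
    then have Nxy: "N x = N y" unfolding f_def by (metis length_map length_upt minus_nat.diff_0)
    show "x = y"
    proof (rule poly_mapping_eqI)
      fix k
      show "Poly_Mapping.lookup x k = Poly_Mapping.lookup y k"
      proof (cases "k < N x")
        case True
        then have "f x ! k = Poly_Mapping.lookup x k" "f y ! k = Poly_Mapping.lookup y k"
          unfolding f_def using Nxy by simp_all
        then show ?thesis using fe by simp
      next
        case False
        then show ?thesis using big[of x k] big[of y k] Nxy by simp
      qed
    qed
  qed
  then show ?thesis using countable_image_inj_on[of f UNIV] by simp
qed

lemma countable_positions: "countable (UNIV :: ('f::{zero,countable}) vec list set)"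
  using countable_lists[OF countable_vec] by simp

lemma fusion_positions:
  fixes X0 :: "'f::{field,countable} vec set" and Q :: "'f vec list \<Rightarrow> 'f vec set \<Rightarrow> bool"
  assumes X0: "block_subspace X0"
    and dense: "\<And>p Y. block_subspace Y \<Longrightarrow> \<exists>Y'. block_subspace Y' \<and> Y' \<subseteq> Y \<and> Q p Y'"
    and stable: "\<And>p Y Z M. Q p Y \<Longrightarrow> block_subspace Y \<Longrightarrow> block_subspace Z \<Longrightarrow> tail Z M \<subseteq> Y \<Longrightarrow> Q p Z"
  shows "\<exists>X. block_subspace X \<and> X \<subseteq> X0 \<and> (\<forall>p. Q p X)"
proof -
  obtain enum :: "nat \<Rightarrow> 'f vec list" where enum: "surj enum"
    using range_from_nat_into[OF _ countable_positions] by blast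
  obtain X where "block_subspace X" "X \<subseteq> X0" "\<forall>i. Q (enum i) X"
    using fusion[OF X0, of "\<lambda>i. Q (enum i)"] dense stable by blast
  moreover have "Q p X" if "\<forall>i. Q (enum i) X" for p
    using that enum by (metis surjD)
  ultimately show ?thesis by blast
qed

section \<open>Winning positions for player I\<close>

definition quasi_strategy ::
  "'f::field vec list set \<Rightarrow> 'f vec set \<Rightarrow> (nat \<Rightarrow> 'f vec) set \<Rightarrow> 'f vec list \<Rightarrow> 'f vec list set \<Rightarrow> bool" where
  "quasi_strategy T W A p P \<longleftrightarrow> p \<in> P \<and> (\<forall>q\<in>P. q \<in> T \<and> prefix p q) \<and>
    (\<forall>q\<in>P. even (length q) \<longrightarrow> (\<forall>Z. block_subspace Z \<and> Z \<subseteq> W \<longrightarrow> (\<exists>x\<in>Z. x \<noteq> 0 \<and> q @ [x] \<in> P))) \<and>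
    (\<forall>q\<in>P. odd (length q) \<longrightarrow> (\<exists>n. \<forall>y\<in>tail W n. q @ [y] \<in> T \<longrightarrow> q @ [y] \<in> P)) \<and>
    (\<forall>s. (\<exists>N. \<forall>m\<ge>N. map s [0..<m] \<in> P) \<longrightarrow> s \<in> A)"

definition I_wins_from :: "'f::field vec list set \<Rightarrow> 'f vec set \<Rightarrow> (nat \<Rightarrow> 'f vec) set \<Rightarrow> 'f vec list \<Rightarrow> bool" where
  "I_wins_from T W A p \<longleftrightarrow> (\<exists>P. quasi_strategy T W A p P)"

lemma quasi_strategy_root: "quasi_strategy T W A p P \<Longrightarrow> p \<in> P"
  unfolding quasi_strategy_def by blast

lemma quasi_strategy_T: "quasi_strategy T W A p P \<Longrightarrow> q \<in> P \<Longrightarrow> q \<in> T"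
  unfolding quasi_strategy_def by blast

lemma quasi_strategy_prefix: "quasi_strategy T W A p P \<Longrightarrow> q \<in> P \<Longrightarrow> prefix p q"
  unfolding quasi_strategy_def by blast

lemma quasi_strategy_I_move:
  "quasi_strategy T W A p P \<Longrightarrow> q \<in> P \<Longrightarrow> even (length q) \<Longrightarrow> block_subspace Z \<Longrightarrow> Z \<subseteq> W \<Longrightarrow>
   \<exists>x\<in>Z. x \<noteq> 0 \<and> q @ [x] \<in> P"
  unfolding quasi_strategy_def by blast

lemma quasi_strategy_II_move:
  "quasi_strategy T W A p P \<Longrightarrow> q \<in> P \<Longrightarrow> odd (length q) \<Longrightarrow>
   \<exists>n. \<forall>y\<in>tail W n. q @ [y] \<in> T \<longrightarrow> q @ [y] \<in> P"
  unfolding quasi_strategy_def by blast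

lemma quasi_strategy_wins: "quasi_strategy T W A p P \<Longrightarrow> \<forall>m\<ge>N. map s [0..<m] \<in> P \<Longrightarrow> s \<in> A"
  unfolding quasi_strategy_def by blast

lemma quasi_strategyI:
  assumes "p \<in> P" "\<And>q. q \<in> P \<Longrightarrow> q \<in> T \<and> prefix p q"
    "\<And>q Z. q \<in> P \<Longrightarrow> even (length q) \<Longrightarrow> block_subspace Z \<Longrightarrow> Z \<subseteq> W \<Longrightarrow> \<exists>x\<in>Z. x \<noteq> 0 \<and> q @ [x] \<in> P"
    "\<And>q. q \<in> P \<Longrightarrow> odd (length q) \<Longrightarrow> \<exists>n. \<forall>y\<in>tail W n. q @ [y] \<in> T \<longrightarrow> q @ [y] \<in> P"
    "\<And>s N. \<forall>m\<ge>N. map s [0..<m] \<in> P \<Longrightarrow> s \<in> A"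
  shows "quasi_strategy T W A p P"
  unfolding quasi_strategy_def
  by (intro conjI ballI allI impI; (elim exE)?) (use assms in \<open>blast+\<close>)

text \<open>Winning for I is inherited by block subspaces (II's offers become more restricted) and,
  more generally, by block subspaces almost included in W.\<close>
lemma quasi_strategy_almost_subspace:
  fixes Y :: "'f::field vec set"
  assumes P: "quasi_strategy T Y A p P" and Y: "block_subspace Y" and ZY: "tail Z M \<subseteq> Y"
  shows "quasi_strategy T Z A p P"
proof (rule quasi_strategyI)
  fix q Z' assume q: "q \<in> P" "even (length q)" and Z': "block_subspace Z'" "Z' \<subseteq> Z"
  obtain Z'' where "block_subspace Z''" "Z'' \<subseteq> Z'" "Z'' \<subseteq> Y"
    using block_subspace_inside[OF Y Z' ZY] by blast
  then show "\<exists>x\<in>Z'. x \<noteq> 0 \<and> q @ [x] \<in> P" using quasi_strategy_I_move[OF P q] by blast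
next
  fix q assume "q \<in> P" "odd (length q)"
  then obtain n where "\<forall>y\<in>tail Y n. q @ [y] \<in> T \<longrightarrow> q @ [y] \<in> P"
    using quasi_strategy_II_move[OF P] by blast
  then show "\<exists>n. \<forall>y\<in>tail Z n. q @ [y] \<in> T \<longrightarrow> q @ [y] \<in> P" using tail_inside[OF ZY] by blast
next
  fix s N assume "\<forall>m\<ge>N. map s [0..<m] \<in> P"
  then show "s \<in> A" by (rule quasi_strategy_wins[OF P])
qed (use quasi_strategy_root[OF P] quasi_strategy_T[OF P] quasi_strategy_prefix[OF P] in blast)+

lemma I_wins_from_almost_subspace:
  fixes Y :: "'f::field vec set"
  assumes "I_wins_from T Y A p" "block_subspace Y" "tail Z M \<subseteq> Y"
  shows "I_wins_from T Z A p"
  using quasi_strategy_almost_subspace[OF _ assms(2,3)] assms(1) unfolding I_wins_from_def by blast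

lemma I_wins_from_mono:
  assumes "I_wins_from T W A p" "W' \<subseteq> W"
  shows "I_wins_from T W' A p"
proof -
  obtain P where P: "quasi_strategy T W A p P" using assms(1) unfolding I_wins_from_def by blast
  have "quasi_strategy T W' A p P"
  proof (rule quasi_strategyI)
    fix q Z assume "q \<in> P" "even (length q)" "block_subspace Z" "Z \<subseteq> W'"
    then show "\<exists>x\<in>Z. x \<noteq> 0 \<and> q @ [x] \<in> P"
      using quasi_strategy_I_move[OF P] assms(2) by (meson order_trans)
  next
    fix q assume "q \<in> P" "odd (length q)"
    then obtain n where "\<forall>y\<in>tail W n. q @ [y] \<in> T \<longrightarrow> q @ [y] \<in> P"
      using quasi_strategy_II_move[OF P] by blast
    moreover have "tail W' n \<subseteq> tail W n" using assms(2) unfolding tail_def by auto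
    ultimately show "\<exists>n. \<forall>y\<in>tail W' n. q @ [y] \<in> T \<longrightarrow> q @ [y] \<in> P" by blast
  next
    fix s N assume "\<forall>m\<ge>N. map s [0..<m] \<in> P"
    then show "s \<in> A" by (rule quasi_strategy_wins[OF P])
  qed (use quasi_strategy_root[OF P] quasi_strategy_T[OF P] quasi_strategy_prefix[OF P] in blast)+
  then show ?thesis unfolding I_wins_from_def by blast
qed

lemma prefix_map_nth:
  assumes "prefix q (map s [0..<m])" "i < length q"
  shows "s i = q ! i"
proof -
  obtain r where r: "map s [0..<m] = q @ r" using assms(1) by (auto elim: prefixE)
  have "i < m" using assms(2) arg_cong[OF r, of length] by simp
  then have "map s [0..<m] ! i = s i" by simp
  then show ?thesis using r assms(2) by (simp add: nth_append)
qed

text \<open>The winning condition for glued quasi-strategies: a play eventually inside the union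
  is eventually inside the quasi-strategy F x of its own move x at p.\<close>
lemma quasi_strategy_union_wins:
  assumes F: "\<And>x. x\<in>G \<Longrightarrow> quasi_strategy T W A (p @ [x]) (F x)"
    and N: "\<forall>m\<ge>N. map s [0..<m] \<in> insert p (\<Union>x\<in>G. F x)"
  shows "s \<in> A"
proof -
  define N' where "N' = max N (Suc (length p))"
  have inF: "\<exists>x\<in>G. map s [0..<m] \<in> F x" if "m \<ge> N'" for m
  proof -
    have "map s [0..<m] \<in> insert p (\<Union>x\<in>G. F x)" using N that unfolding N'_def by simp
    moreover have "length (map s [0..<m]) \<noteq> length p" using that unfolding N'_def by simp
    then have "map s [0..<m] \<noteq> p" by metis
    ultimately show ?thesis by blast
  qed
  have move: "x = s (length p)" if x: "x \<in> G" "map s [0..<m] \<in> F x" for x m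
    using prefix_map_nth[OF quasi_strategy_prefix[OF F[OF x(1)] x(2)], of "length p"] by simp
  obtain x0 where x0: "x0 \<in> G" "map s [0..<N'] \<in> F x0" using inF by blast
  have "\<forall>m\<ge>N'. map s [0..<m] \<in> F x0"
  proof (intro allI impI)
    fix m assume "N' \<le> m"
    then obtain x where "x \<in> G" "map s [0..<m] \<in> F x" using inF by blast
    moreover have "x = x0" using move[OF calculation] move[OF x0] by simp
    ultimately show "map s [0..<m] \<in> F x0" by simp
  qed
  then show ?thesis using quasi_strategy_wins[OF F[OF x0(1)]] by blast
qed

lemma quasi_strategy_union:
  fixes p :: "'f::field vec list"
  assumes pT: "p \<in> T"
    and F: "\<And>x. x\<in>G \<Longrightarrow> quasi_strategy T W A (p @ [x]) (F x)"
    and I_move: "even (length p) \<Longrightarrow> (\<forall>Z. block_subspace Z \<and> Z \<subseteq> W \<longrightarrow> (\<exists>x\<in>Z. x \<noteq> 0 \<and> x \<in> G))"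
    and II_move: "odd (length p) \<Longrightarrow> (\<exists>n. \<forall>y\<in>tail W n. p @ [y] \<in> T \<longrightarrow> y \<in> G)"
  shows "quasi_strategy T W A p (insert p (\<Union>x\<in>G. F x))"
proof (rule quasi_strategyI)
  let ?P = "insert p (\<Union>x\<in>G. F x)"
  have memF: "x \<in> G \<Longrightarrow> p @ [x] \<in> F x" for x using quasi_strategy_root[OF F] .
  show "q \<in> T \<and> prefix p q" if qP: "q \<in> ?P" for q
  proof (cases "q = p")
    case False
    then obtain x where x: "x \<in> G" "q \<in> F x" using qP by blast
    have "prefix (p @ [x]) q" by (rule quasi_strategy_prefix[OF F[OF x(1)] x(2)])
    then show ?thesis using quasi_strategy_T[OF F[OF x(1)] x(2)] append_prefixD by blast
  qed (use pT in simp)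
  show "\<exists>x\<in>Z. x \<noteq> 0 \<and> q @ [x] \<in> ?P"
    if q: "q \<in> ?P" "even (length q)" and Z: "block_subspace Z" "Z \<subseteq> W" for q Z
  proof (cases "q = p")
    case True
    then show ?thesis using I_move q(2) Z memF by blast
  next
    case False
    then obtain x where x: "x \<in> G" "q \<in> F x" using q by blast
    then show ?thesis using quasi_strategy_I_move[OF F[OF x(1)] x(2) q(2) Z] by blast
  qed
  show "\<exists>n. \<forall>y\<in>tail W n. q @ [y] \<in> T \<longrightarrow> q @ [y] \<in> ?P" if q: "q \<in> ?P" "odd (length q)" for q
  proof (cases "q = p")
    case True
    then show ?thesis using II_move q(2) memF by blast
  next
    case False
    then obtain x where x: "x \<in> G" "q \<in> F x" using q by blast
    then show ?thesis using quasi_strategy_II_move[OF F[OF x(1)] x(2) q(2)] by blast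
  qed
  show "s \<in> A" if "\<forall>m\<ge>N. map s [0..<m] \<in> ?P" for s N
    using quasi_strategy_union_wins[OF F that] .
qed simp

lemma I_wins_from_successors:
  fixes p :: "'f::field vec list"
  assumes pT: "p \<in> T"
    and I_move: "even (length p) \<Longrightarrow> (\<forall>Z. block_subspace Z \<and> Z \<subseteq> W \<longrightarrow>
                    (\<exists>x\<in>Z. x \<noteq> 0 \<and> I_wins_from T W A (p @ [x])))"
    and II_move: "odd (length p) \<Longrightarrow> (\<exists>n. \<forall>y\<in>tail W n. p @ [y] \<in> T \<longrightarrow> I_wins_from T W A (p @ [y]))"
  shows "I_wins_from T W A p"
proof -
  define G where "G = {x. I_wins_from T W A (p @ [x])}"
  define F where "F x = (SOME P. quasi_strategy T W A (p @ [x]) P)" for x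
  have F: "quasi_strategy T W A (p @ [x]) (F x)" if "x \<in> G" for x
    using that unfolding G_def F_def I_wins_from_def by (auto intro: someI_ex)
  have "quasi_strategy T W A p (insert p (\<Union>x\<in>G. F x))"
  proof (rule quasi_strategy_union[OF pT F])
    show "\<forall>Z. block_subspace Z \<and> Z \<subseteq> W \<longrightarrow> (\<exists>x\<in>Z. x \<noteq> 0 \<and> x \<in> G)" if "even (length p)"
      using I_move[OF that] unfolding G_def by blast
    show "\<exists>n. \<forall>y\<in>tail W n. p @ [y] \<in> T \<longrightarrow> y \<in> G" if "odd (length p)"
      using II_move[OF that] unfolding G_def by blast
  qed
  then show ?thesis unfolding I_wins_from_def by (rule exI)
qed

lemma is_rule_far_moves:
  "is_rule V v T \<Longrightarrow> y \<in> T \<Longrightarrow> even (length y) \<Longrightarrow> \<exists>n. \<forall>z\<in>tail V n. y @ [z] \<in> T"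
  unfolding is_rule_def by blast

text \<open>A position of T all of whose continuations lie in A is winning for I (in a subspace of V,
  T being a (V,v)-rule): the whole subtree of T above p is a quasi-strategy.\<close>
lemma I_wins_from_trivial:
  fixes p :: "'f::field vec list"
  assumes rule: "is_rule V v T" and WV: "W \<subseteq> V" and pT: "p \<in> T"
    and A: "\<forall>s. map s [0..<length p] = p \<longrightarrow> s \<in> A"
  shows "I_wins_from T W A p"
proof -
  let ?P = "{q\<in>T. prefix p q}"
  have "quasi_strategy T W A p ?P"
  proof (rule quasi_strategyI)
    fix q Z assume q: "q \<in> ?P" "even (length q)" and Z: "block_subspace Z" "Z \<subseteq> W"
    have "q \<in> T" using q(1) by simp
    then obtain n where n: "\<forall>z\<in>tail V n. q @ [z] \<in> T" using is_rule_far_moves[OF rule _ q(2)] by blast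
    obtain x where x: "x \<in> Z" "x \<noteq> 0" "n < Min (Poly_Mapping.keys x)"
      using block_subspace_vector_beyond[OF Z(1)] by blast
    have "x \<in> tail V n" using x Z(2) WV unfolding tail_def by auto
    then have "q @ [x] \<in> ?P" using n q(1) by simp
    then show "\<exists>x\<in>Z. x \<noteq> 0 \<and> q @ [x] \<in> ?P" using x by blast
  next
    fix q assume "q \<in> ?P"
    then have "\<forall>y. q @ [y] \<in> T \<longrightarrow> q @ [y] \<in> ?P" by simp
    then show "\<exists>n. \<forall>y\<in>tail W n. q @ [y] \<in> T \<longrightarrow> q @ [y] \<in> ?P" by blast
  next
    fix s N assume N: "\<forall>m\<ge>N. map s [0..<m] \<in> ?P"
    have "map s [0..<max N (length p)] \<in> ?P" using N[rule_format, of "max N (length p)"] by linarith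
    then have pre: "prefix p (map s [0..<max N (length p)])" by simp
    have "s i = p ! i" if "i < length p" for i by (rule prefix_map_nth[OF pre that])
    then have "map s [0..<length p] = p" by (intro nth_equalityI) auto
    then show "s \<in> A" using A by blast
  qed (use pT in simp_all)
  then show ?thesis unfolding I_wins_from_def by blast
qed

lemma quasi_strategy_restrict:
  assumes P: "quasi_strategy T W A p P" and q: "q \<in> P"
  shows "quasi_strategy T W A q {r \<in> P. prefix q r}"
proof (rule quasi_strategyI)
  fix r Z assume r: "r \<in> {r \<in> P. prefix q r}" "even (length r)" and Z: "block_subspace Z" "Z \<subseteq> W"
  then obtain x where "x \<in> Z" "x \<noteq> 0" "r @ [x] \<in> P"
    using quasi_strategy_I_move[OF P _ r(2) Z] r(1) by blast
  moreover have "prefix q (r @ [x])" using r(1) by simp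
  ultimately show "\<exists>x\<in>Z. x \<noteq> 0 \<and> r @ [x] \<in> {r \<in> P. prefix q r}" by blast
next
  fix r assume r: "r \<in> {r \<in> P. prefix q r}" "odd (length r)"
  then obtain n where "\<forall>y\<in>tail W n. r @ [y] \<in> T \<longrightarrow> r @ [y] \<in> P"
    using quasi_strategy_II_move[OF P] r by blast
  moreover have "prefix q (r @ [y])" for y using r(1) by simp
  ultimately show "\<exists>n. \<forall>y\<in>tail W n. r @ [y] \<in> T \<longrightarrow> r @ [y] \<in> {r \<in> P. prefix q r}" by blast
next
  fix s N assume "\<forall>m\<ge>N. map s [0..<m] \<in> {r \<in> P. prefix q r}"
  then have "\<forall>m\<ge>N. map s [0..<m] \<in> P" by blast
  then show "s \<in> A" by (rule quasi_strategy_wins[OF P])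
qed (use q quasi_strategy_T[OF P] in blast)+

section \<open>From quasi-strategies to strategies\<close>

definition xs_ev :: "('f vec list \<Rightarrow> 'f vec set list \<Rightarrow> 'f vec) \<Rightarrow> (nat \<Rightarrow> 'f vec) \<Rightarrow> (nat \<Rightarrow> 'f vec set) \<Rightarrow> nat \<Rightarrow> 'f vec" where
  "xs_ev \<sigma>x ys Zs k = \<sigma>x (map ys [0..<k]) (map Zs [0..<Suc k])"
definition ns_ev :: "('f vec list \<Rightarrow> 'f vec set list \<Rightarrow> nat) \<Rightarrow> (nat \<Rightarrow> 'f vec) \<Rightarrow> (nat \<Rightarrow> 'f vec set) \<Rightarrow> nat \<Rightarrow> nat" where
  "ns_ev \<sigma>n ys Zs k = \<sigma>n (map ys [0..<k]) (map Zs [0..<Suc k])"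
definition play_ev :: "('f vec list \<Rightarrow> 'f vec set list \<Rightarrow> 'f vec) \<Rightarrow> (nat \<Rightarrow> 'f vec) \<Rightarrow> (nat \<Rightarrow> 'f vec set) \<Rightarrow> nat \<Rightarrow> 'f vec" where
  "play_ev \<sigma>x ys Zs = game_stream True (xs_ev \<sigma>x ys Zs) ys"
definition II_ok_ev ::
  "'f::field vec list set \<Rightarrow> 'f vec set \<Rightarrow> 'f vec list \<Rightarrow> ('f vec list \<Rightarrow> 'f vec set list \<Rightarrow> 'f vec)
   \<Rightarrow> ('f vec list \<Rightarrow> 'f vec set list \<Rightarrow> nat) \<Rightarrow> (nat \<Rightarrow> 'f vec) \<Rightarrow> (nat \<Rightarrow> 'f vec set) \<Rightarrow> nat \<Rightarrow> bool" where
  "II_ok_ev T W v \<sigma>x \<sigma>n ys Zs k \<longleftrightarrow> block_subspace (Zs k) \<and> Zs k \<subseteq> W \<and>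
     (0 < k \<longrightarrow> ys (k - 1) \<in> tail W (ns_ev \<sigma>n ys Zs (k - 1)) \<and> v @ map (play_ev \<sigma>x ys Zs) [0..<2 * k] \<in> T)"
definition I_ok_ev ::
  "'f::field vec list set \<Rightarrow> 'f vec list \<Rightarrow> ('f vec list \<Rightarrow> 'f vec set list \<Rightarrow> 'f vec)
   \<Rightarrow> (nat \<Rightarrow> 'f vec) \<Rightarrow> (nat \<Rightarrow> 'f vec set) \<Rightarrow> nat \<Rightarrow> bool" where
  "I_ok_ev T v \<sigma>x ys Zs k \<longleftrightarrow> xs_ev \<sigma>x ys Zs k \<in> Zs k \<and> xs_ev \<sigma>x ys Zs k \<noteq> 0 \<and>
     v @ map (play_ev \<sigma>x ys Zs) [0..<2 * k + 1] \<in> T"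

definition xs_od :: "('f vec list \<Rightarrow> 'f vec set list \<Rightarrow> 'f vec) \<Rightarrow> (nat \<Rightarrow> 'f vec) \<Rightarrow> (nat \<Rightarrow> 'f vec set) \<Rightarrow> nat \<Rightarrow> 'f vec" where
  "xs_od \<sigma>x ys Zs k = \<sigma>x (map ys [0..<Suc k]) (map Zs [0..<Suc k])"
definition ns_od :: "('f vec list \<Rightarrow> 'f vec set list \<Rightarrow> nat) \<Rightarrow> (nat \<Rightarrow> 'f vec) \<Rightarrow> (nat \<Rightarrow> 'f vec set) \<Rightarrow> nat \<Rightarrow> nat" where
  "ns_od \<sigma>n ys Zs k = \<sigma>n (map ys [0..<k]) (map Zs [0..<k])"
definition play_od :: "('f vec list \<Rightarrow> 'f vec set list \<Rightarrow> 'f vec) \<Rightarrow> (nat \<Rightarrow> 'f vec) \<Rightarrow> (nat \<Rightarrow> 'f vec set) \<Rightarrow> nat \<Rightarrow> 'f vec" where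
  "play_od \<sigma>x ys Zs = game_stream False (xs_od \<sigma>x ys Zs) ys"
definition II_ok_od ::
  "'f::field vec list set \<Rightarrow> 'f vec set \<Rightarrow> 'f vec list \<Rightarrow> ('f vec list \<Rightarrow> 'f vec set list \<Rightarrow> 'f vec)
   \<Rightarrow> ('f vec list \<Rightarrow> 'f vec set list \<Rightarrow> nat) \<Rightarrow> (nat \<Rightarrow> 'f vec) \<Rightarrow> (nat \<Rightarrow> 'f vec set) \<Rightarrow> nat \<Rightarrow> bool" where
  "II_ok_od T W v \<sigma>x \<sigma>n ys Zs k \<longleftrightarrow> ys k \<in> tail W (ns_od \<sigma>n ys Zs k) \<and>
     v @ map (play_od \<sigma>x ys Zs) [0..<2 * k + 1] \<in> T \<and> block_subspace (Zs k) \<and> Zs k \<subseteq> W"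
definition I_ok_od ::
  "'f::field vec list set \<Rightarrow> 'f vec list \<Rightarrow> ('f vec list \<Rightarrow> 'f vec set list \<Rightarrow> 'f vec)
   \<Rightarrow> (nat \<Rightarrow> 'f vec) \<Rightarrow> (nat \<Rightarrow> 'f vec set) \<Rightarrow> nat \<Rightarrow> bool" where
  "I_ok_od T v \<sigma>x ys Zs k \<longleftrightarrow> (0 < k \<longrightarrow> xs_od \<sigma>x ys Zs (k - 1) \<in> Zs (k - 1) \<and> xs_od \<sigma>x ys Zs (k - 1) \<noteq> 0 \<and>
     v @ map (play_od \<sigma>x ys Zs) [0..<2 * k] \<in> T)"

lemma I_strategy_in_even:
  assumes "even (length v)"
  shows "I_strategy_in T W v A \<sigma>x \<sigma>n \<longleftrightarrow> (\<forall>ys Zs.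
    (\<forall>k. (\<forall>j\<le>k. II_ok_ev T W v \<sigma>x \<sigma>n ys Zs j) \<longrightarrow> I_ok_ev T v \<sigma>x ys Zs k) \<and>
    ((\<forall>k. II_ok_ev T W v \<sigma>x \<sigma>n ys Zs k) \<longrightarrow> outcome v (play_ev \<sigma>x ys Zs) \<in> A))"
  using assms unfolding I_strategy_in_def Let_def II_ok_ev_def I_ok_ev_def play_ev_def xs_ev_def ns_ev_def
  by simp

lemma I_strategy_in_odd:
  assumes "odd (length v)"
  shows "I_strategy_in T W v A \<sigma>x \<sigma>n \<longleftrightarrow> (\<forall>ys Zs.
    (\<forall>k. (\<forall>j<k. II_ok_od T W v \<sigma>x \<sigma>n ys Zs j) \<longrightarrow> I_ok_od T v \<sigma>x ys Zs k) \<and>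
    ((\<forall>k. II_ok_od T W v \<sigma>x \<sigma>n ys Zs k) \<longrightarrow> outcome v (play_od \<sigma>x ys Zs) \<in> A))"
  using assms unfolding I_strategy_in_def Let_def II_ok_od_def I_ok_od_def play_od_def xs_od_def ns_od_def
  by simp

lemma game_stream_ev_I [simp]: "game_stream True xs ys (2 * k) = xs k"
  unfolding game_stream_def by simp
lemma game_stream_ev_II [simp]: "game_stream True xs ys (Suc (2 * k)) = ys k"
  unfolding game_stream_def by simp
lemma game_stream_od_II [simp]: "game_stream False xs ys (2 * k) = ys k"
  unfolding game_stream_def by simp
lemma game_stream_od_I [simp]: "game_stream False xs ys (Suc (2 * k)) = xs k"
  unfolding game_stream_def by simp

lemma outcome_prefix: "map (outcome v w) [0..<length v + j] = v @ map w [0..<j]"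
  by (rule nth_equalityI) (auto simp: outcome_def nth_append)

lemma outcome_shift: "outcome v w = outcome (v @ map w [0..<m]) (\<lambda>i. w (m + i))"
  by (rule ext) (auto simp: outcome_def nth_append)

text \<open>Following a quasi-strategy P from a position p of even length: against the subspace Z
  offered by II, I plays a vector qs_vec P p Z keeping the position in P, and then demands
  that II's answer lies beyond qs_bound, which keeps legal answers in P.  The position after a
  history of II's moves is computed by qs_path.\<close>
definition qs_vec :: "'f::field vec list set \<Rightarrow> 'f vec list \<Rightarrow> 'f vec set \<Rightarrow> 'f vec" where
  "qs_vec P p Z = (SOME x. x \<in> Z \<and> x \<noteq> 0 \<and> p @ [x] \<in> P)"
definition qs_bound :: "'f::field vec list set \<Rightarrow> 'f vec set \<Rightarrow> 'f vec list set \<Rightarrow> 'f vec list \<Rightarrow> nat" where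
  "qs_bound T W P q = (SOME n. \<forall>y\<in>tail W n. q @ [y] \<in> T \<longrightarrow> q @ [y] \<in> P)"

primrec qs_path :: "'f::field vec list set \<Rightarrow> 'f vec list \<Rightarrow> ('f vec \<times> 'f vec set) list \<Rightarrow> 'f vec list" where
  "qs_path P p [] = p"
| "qs_path P p (a # r) = qs_path P (p @ [qs_vec P p (snd a), fst a]) r"

lemma qs_path_snoc: "qs_path P p (l @ [(y, Z)]) = qs_path P p l @ [qs_vec P (qs_path P p l) Z, y]"
  by (induction l arbitrary: p) auto

lemma zip_map_upt: "zip (map f [0..<k]) (map g [0..<Suc k]) = map (\<lambda>i. (f i, g i)) [0..<k]"
  by (rule nth_equalityI) (auto simp: nth_append)

definition qs_strategy_vec :: "'f::field vec list set \<Rightarrow> 'f vec list \<Rightarrow> 'f vec list \<Rightarrow> 'f vec set list \<Rightarrow> 'f vec" where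
  "qs_strategy_vec P v ys Zs = qs_vec P (qs_path P v (zip ys Zs)) (last Zs)"
definition qs_strategy_bound ::
  "'f::field vec list set \<Rightarrow> 'f vec set \<Rightarrow> 'f vec list set \<Rightarrow> 'f vec list \<Rightarrow> 'f vec list \<Rightarrow> 'f vec set list \<Rightarrow> nat" where
  "qs_strategy_bound T W P v ys Zs = qs_bound T W P (qs_path P v (zip ys Zs) @ [qs_strategy_vec P v ys Zs])"

lemma qs_vec_spec:
  assumes "quasi_strategy T W A v P" "p \<in> P" "even (length p)" "block_subspace Z" "Z \<subseteq> W"
  shows "qs_vec P p Z \<in> Z \<and> qs_vec P p Z \<noteq> 0 \<and> p @ [qs_vec P p Z] \<in> P"
proof -
  have "\<exists>x. x \<in> Z \<and> x \<noteq> 0 \<and> p @ [x] \<in> P" using quasi_strategy_I_move[OF assms] by blast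
  then show ?thesis unfolding qs_vec_def by (rule someI_ex)
qed

lemma qs_bound_spec:
  assumes "quasi_strategy T W A v P" "p \<in> P" "odd (length p)"
  shows "\<forall>y\<in>tail W (qs_bound T W P p). p @ [y] \<in> T \<longrightarrow> p @ [y] \<in> P"
proof -
  have "\<exists>n. \<forall>y\<in>tail W n. p @ [y] \<in> T \<longrightarrow> p @ [y] \<in> P" using quasi_strategy_II_move[OF assms] .
  then show ?thesis unfolding qs_bound_def by (rule someI_ex)
qed

context
  fixes T :: "'f::field vec list set" and W A v P and ys :: "nat \<Rightarrow> 'f vec" and Zs :: "nat \<Rightarrow> 'f vec set"
  assumes QS: "quasi_strategy T W A v P" and ev: "even (length v)"
begin

abbreviation (input) rounds :: "nat \<Rightarrow> ('f vec \<times> 'f vec set) list" where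
  "rounds k \<equiv> map (\<lambda>i. (ys i, Zs i)) [0..<k]"

lemma qs_play_xs: "xs_ev (qs_strategy_vec P v) ys Zs k = qs_vec P (qs_path P v (rounds k)) (Zs k)"
  unfolding xs_ev_def qs_strategy_vec_def zip_map_upt by simp

lemma qs_play_ns:
  "ns_ev (qs_strategy_bound T W P v) ys Zs k =
   qs_bound T W P (qs_path P v (rounds k) @ [qs_vec P (qs_path P v (rounds k)) (Zs k)])"
  unfolding ns_ev_def qs_strategy_bound_def qs_strategy_vec_def zip_map_upt by simp

lemma qs_play_positions: "v @ map (play_ev (qs_strategy_vec P v) ys Zs) [0..<2 * k] = qs_path P v (rounds k)"
proof (induction k)
  case (Suc k)
  let ?w = "play_ev (qs_strategy_vec P v) ys Zs"
  have "v @ map ?w [0..<2 * Suc k] = (v @ map ?w [0..<2 * k]) @ [?w (2 * k), ?w (Suc (2 * k))]"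
    by simp
  also have "\<dots> = qs_path P v (rounds k) @ [qs_vec P (qs_path P v (rounds k)) (Zs k), ys k]"
    using Suc qs_play_xs[of k] unfolding play_ev_def by simp
  also have "\<dots> = qs_path P v (rounds (Suc k))" by (simp add: qs_path_snoc)
  finally show ?case .
qed simp

lemma qs_play_positions_odd:
  "v @ map (play_ev (qs_strategy_vec P v) ys Zs) [0..<2 * k + 1] =
   qs_path P v (rounds k) @ [qs_vec P (qs_path P v (rounds k)) (Zs k)]"
  using qs_play_positions[of k] qs_play_xs[of k] unfolding play_ev_def by simp

lemma qs_play_length: "length (qs_path P v (rounds k)) = length v + 2 * k"
  using arg_cong[OF qs_play_positions[of k], of length] by simp

lemma qs_play_I_move:
  assumes "qs_path P v (rounds k) \<in> P" "block_subspace (Zs k)" "Zs k \<subseteq> W"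
  shows "qs_vec P (qs_path P v (rounds k)) (Zs k) \<in> Zs k \<and> qs_vec P (qs_path P v (rounds k)) (Zs k) \<noteq> 0 \<and>
         qs_path P v (rounds k) @ [qs_vec P (qs_path P v (rounds k)) (Zs k)] \<in> P"
  using qs_vec_spec[OF QS assms(1) _ assms(2,3)] qs_play_length[of k] ev by simp

lemma qs_play_in_P:
  assumes "\<forall>j\<le>k. II_ok_ev T W v (qs_strategy_vec P v) (qs_strategy_bound T W P v) ys Zs j"
  shows "qs_path P v (rounds k) \<in> P"
  using assms
proof (induction k)
  case 0 then show ?case using quasi_strategy_root[OF QS] by simp
next
  case (Suc k)
  let ?p = "qs_path P v (rounds k)" and ?x = "qs_vec P (qs_path P v (rounds k)) (Zs k)"
  have "block_subspace (Zs k)" "Zs k \<subseteq> W" using Suc.prems unfolding II_ok_ev_def by auto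
  then have I_move: "?p @ [?x] \<in> P" using qs_play_I_move Suc by simp
  have odd: "odd (length (?p @ [?x]))" using qs_play_length[of k] ev by simp
  let ?w = "play_ev (qs_strategy_vec P v) ys Zs"
  have far: "ys k \<in> tail W (ns_ev (qs_strategy_bound T W P v) ys Zs k)"
    and legal: "v @ map ?w [0..<2 * Suc k] \<in> T"
    using Suc.prems[rule_format, of "Suc k"] unfolding II_ok_ev_def by auto
  have pos: "v @ map ?w [0..<2 * Suc k] = (?p @ [?x]) @ [ys k]"
    using qs_play_positions[of "Suc k"] by (simp add: qs_path_snoc)
  have "ys k \<in> tail W (qs_bound T W P (?p @ [?x]))" using far unfolding qs_play_ns .
  moreover have "(?p @ [?x]) @ [ys k] \<in> T" using legal unfolding pos .
  ultimately have "(?p @ [?x]) @ [ys k] \<in> P" using qs_bound_spec[OF QS I_move odd] by blast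
  then show ?case by (simp add: qs_path_snoc)
qed

end

lemma quasi_strategy_strategy_even:
  assumes QS: "quasi_strategy T W A v P" and ev: "even (length v)"
  shows "I_strategy_in T W v A (qs_strategy_vec P v) (qs_strategy_bound T W P v)"
  unfolding I_strategy_in_even[OF ev]
proof (intro allI conjI impI)
  fix ys :: "nat \<Rightarrow> _" and Zs :: "nat \<Rightarrow> _"
  let ?sx = "qs_strategy_vec P v" and ?sn = "qs_strategy_bound T W P v"
  let ?p = "\<lambda>k. qs_path P v (map (\<lambda>i. (ys i, Zs i)) [0..<k])"
  show "I_ok_ev T v ?sx ys Zs k" if II: "\<forall>j\<le>k. II_ok_ev T W v ?sx ?sn ys Zs j" for k
  proof -
    have "block_subspace (Zs k)" "Zs k \<subseteq> W" using II unfolding II_ok_ev_def by auto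
    then have "qs_vec P (?p k) (Zs k) \<in> Zs k \<and> qs_vec P (?p k) (Zs k) \<noteq> 0 \<and> ?p k @ [qs_vec P (?p k) (Zs k)] \<in> P"
      using qs_play_I_move[OF QS ev qs_play_in_P[OF QS ev II]] by blast
    moreover have "v @ map (play_ev ?sx ys Zs) [0..<2 * k + 1] \<in> T"
      unfolding qs_play_positions_odd[OF QS ev] using calculation quasi_strategy_T[OF QS] by blast
    ultimately show ?thesis unfolding I_ok_ev_def qs_play_xs[OF QS ev] by blast
  qed
  show "outcome v (play_ev ?sx ys Zs) \<in> A" if II: "\<forall>k. II_ok_ev T W v ?sx ?sn ys Zs k"
  proof -
    let ?w = "play_ev ?sx ys Zs"
    have inP: "?p k \<in> P" "?p k @ [qs_vec P (?p k) (Zs k)] \<in> P" for k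
    proof -
      show "?p k \<in> P" using qs_play_in_P[OF QS ev] II by blast
      moreover have "block_subspace (Zs k)" "Zs k \<subseteq> W" using II unfolding II_ok_ev_def by auto
      ultimately show "?p k @ [qs_vec P (?p k) (Zs k)] \<in> P" using qs_play_I_move[OF QS ev] by blast
    qed
    have "v @ map ?w [0..<j] \<in> P" for j
    proof (cases "even j")
      case True then obtain k where j: "j = 2 * k" by (rule evenE)
      show ?thesis unfolding j qs_play_positions[OF QS ev] by (rule inP(1))
    next
      case False then obtain k where j: "j = 2 * k + 1" by (rule oddE)
      show ?thesis unfolding j qs_play_positions_odd[OF QS ev] by (rule inP(2))
    qed
    then have "\<forall>m\<ge>length v. map (outcome v ?w) [0..<m] \<in> P"
      by (metis outcome_prefix le_add_diff_inverse)
    then show ?thesis using quasi_strategy_wins[OF QS] by blast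
  qed
qed

text \<open>A game from a position v of odd length starts with II's vector yz; what remains is the
  game from v @ [yz], of even length, played by the strategies with yz prepended to II's
  history.\<close>
lemma map_upt_Suc_Cons: "map f [0..<Suc k] = f 0 # map (\<lambda>i. f (Suc i)) [0..<k]"
  by (induction k) auto

context
  fixes \<sigma>x :: "'f::field vec list \<Rightarrow> 'f vec set list \<Rightarrow> 'f vec" and \<sigma>n :: "'f vec list \<Rightarrow> 'f vec set list \<Rightarrow> nat"
    and yz :: "'f vec" and ys :: "nat \<Rightarrow> 'f vec" and Zs :: "nat \<Rightarrow> 'f vec set"
  assumes yz: "ys 0 = yz"
begin

lemma odd_tail_xs: "xs_ev (\<lambda>l Z. \<sigma>x (yz # l) Z) (\<lambda>i. ys (Suc i)) Zs k = xs_od \<sigma>x ys Zs k"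
  unfolding xs_ev_def xs_od_def map_upt_Suc_Cons[of ys] yz ..

lemma odd_tail_ns: "ns_ev (\<lambda>l Z. \<sigma>n (yz # l) Z) (\<lambda>i. ys (Suc i)) Zs k = ns_od \<sigma>n ys Zs (Suc k)"
  unfolding ns_ev_def ns_od_def map_upt_Suc_Cons[of ys] yz ..

lemma odd_tail_play: "play_ev (\<lambda>l Z. \<sigma>x (yz # l) Z) (\<lambda>i. ys (Suc i)) Zs j = play_od \<sigma>x ys Zs (Suc j)"
proof (cases "even j")
  case True
  then obtain k where k: "j = 2 * k" by (rule evenE)
  have "Suc j = Suc (2 * k)" using k by simp
  then show ?thesis unfolding play_ev_def play_od_def using k odd_tail_xs[of k] by simp
next
  case False
  then obtain k where k: "j = Suc (2 * k)" by (metis oddE Suc_eq_plus1)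
  have "Suc j = 2 * Suc k" using k by simp
  then show ?thesis unfolding play_ev_def play_od_def using k by (simp del: mult_Suc_right)
qed

lemma odd_tail_positions: "(v @ [yz]) @ map (play_ev (\<lambda>l Z. \<sigma>x (yz # l) Z) (\<lambda>i. ys (Suc i)) Zs) [0..<j] = v @ map (play_od \<sigma>x ys Zs) [0..<Suc j]"
proof -
  have w0: "play_od \<sigma>x ys Zs 0 = yz" unfolding play_od_def game_stream_def using yz by simp
  show ?thesis unfolding map_upt_Suc_Cons[of "play_od \<sigma>x ys Zs"] w0 odd_tail_play by simp
qed

lemma odd_tail_positions_even: "(v @ [yz]) @ map (play_ev (\<lambda>l Z. \<sigma>x (yz # l) Z) (\<lambda>i. ys (Suc i)) Zs) [0..<2 * k] = v @ map (play_od \<sigma>x ys Zs) [0..<2 * k + 1]"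
  using odd_tail_positions[of v "2 * k"] by simp

lemma odd_tail_II_ok_iff: "II_ok_ev T W (v @ [yz]) (\<lambda>l Z. \<sigma>x (yz # l) Z) (\<lambda>l Z. \<sigma>n (yz # l) Z) (\<lambda>i. ys (Suc i)) Zs k \<longleftrightarrow>
   block_subspace (Zs k) \<and> Zs k \<subseteq> W \<and> (0 < k \<longrightarrow> ys k \<in> tail W (ns_od \<sigma>n ys Zs k) \<and> v @ map (play_od \<sigma>x ys Zs) [0..<2 * k + 1] \<in> T)"
proof (cases k)
  case 0 then show ?thesis unfolding II_ok_ev_def by simp
next
  case (Suc k')
  then show ?thesis unfolding II_ok_ev_def odd_tail_ns odd_tail_positions_even by simp
qed

lemma odd_tail_I_ok_iff: "I_ok_ev T (v @ [yz]) (\<lambda>l Z. \<sigma>x (yz # l) Z) (\<lambda>i. ys (Suc i)) Zs k \<longleftrightarrow> I_ok_od T v \<sigma>x ys Zs (Suc k)"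
proof -
  have eq: "(v @ [yz]) @ map (play_ev (\<lambda>l Z. \<sigma>x (yz # l) Z) (\<lambda>i. ys (Suc i)) Zs) [0..<2 * k + 1] = v @ map (play_od \<sigma>x ys Zs) [0..<2 * Suc k]"
    using odd_tail_positions[of v "2 * k + 1"] by simp
  show ?thesis unfolding I_ok_ev_def I_ok_od_def odd_tail_xs eq by simp
qed

lemma odd_tail_outcome: "outcome (v @ [yz]) (play_ev (\<lambda>l Z. \<sigma>x (yz # l) Z) (\<lambda>i. ys (Suc i)) Zs) = outcome v (play_od \<sigma>x ys Zs)"
proof -
  have w0: "play_od \<sigma>x ys Zs 0 = yz" unfolding play_od_def game_stream_def using yz by simp
  have "outcome v (play_od \<sigma>x ys Zs) = outcome (v @ map (play_od \<sigma>x ys Zs) [0..<1]) (\<lambda>i. play_od \<sigma>x ys Zs (1 + i))"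
    by (rule outcome_shift)
  also have "\<dots> = outcome (v @ [yz]) (play_ev (\<lambda>l Z. \<sigma>x (yz # l) Z) (\<lambda>i. ys (Suc i)) Zs)"
  proof -
    have "play_ev (\<lambda>l Z. \<sigma>x (yz # l) Z) (\<lambda>i. ys (Suc i)) Zs = (\<lambda>i. play_od \<sigma>x ys Zs (1 + i))"
      by (rule ext) (simp add: odd_tail_play)
    then show ?thesis using w0 by simp
  qed
  finally show ?thesis by simp
qed

lemma odd_tail_II_ok: "II_ok_od T W v \<sigma>x \<sigma>n ys Zs k \<Longrightarrow> II_ok_ev T W (v @ [yz]) (\<lambda>l Z. \<sigma>x (yz # l) Z) (\<lambda>l Z. \<sigma>n (yz # l) Z) (\<lambda>i. ys (Suc i)) Zs k"
  unfolding odd_tail_II_ok_iff II_ok_od_def by simp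

lemma odd_tail_II_ok_rev:
  assumes "II_ok_ev T W (v @ [yz]) (\<lambda>l Z. \<sigma>x (yz # l) Z) (\<lambda>l Z. \<sigma>n (yz # l) Z) (\<lambda>i. ys (Suc i)) Zs k"
    and "k = 0 \<longrightarrow> yz \<in> tail W (\<sigma>n [] []) \<and> v @ [yz] \<in> T"
  shows "II_ok_od T W v \<sigma>x \<sigma>n ys Zs k"
proof (cases k)
  case 0
  have "v @ map (play_od \<sigma>x ys Zs) [0..<1] = v @ [yz]" unfolding play_od_def game_stream_def using yz by simp
  then show ?thesis using assms 0 yz unfolding odd_tail_II_ok_iff II_ok_od_def ns_od_def by simp
next
  case (Suc k')
  then show ?thesis using assms unfolding odd_tail_II_ok_iff II_ok_od_def by simp
qed

end

lemma strategy_odd_from_successors: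
  fixes \<tau>x :: "'f::field vec \<Rightarrow> 'f vec list \<Rightarrow> 'f vec set list \<Rightarrow> 'f vec"
    and \<tau>n :: "'f vec \<Rightarrow> 'f vec list \<Rightarrow> 'f vec set list \<Rightarrow> nat" and v :: "'f vec list"
  assumes od: "odd (length v)"
    and \<tau>: "\<And>y. y \<in> tail W n0 \<Longrightarrow> v @ [y] \<in> T \<Longrightarrow> I_strategy_in T W (v @ [y]) A (\<tau>x y) (\<tau>n y)"
  shows "I_strategy_in T W v A (\<lambda>l Z. \<tau>x (hd l) (tl l) Z) (\<lambda>l Z. if l = [] then n0 else \<tau>n (hd l) (tl l) Z)"
  unfolding I_strategy_in_odd[OF od]
proof (intro allI)
  fix ys :: "nat \<Rightarrow> 'f vec" and Zs :: "nat \<Rightarrow> 'f vec set"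
  let ?sx = "\<lambda>l Z. \<tau>x (hd l) (tl l) Z" and ?sn = "\<lambda>l Z. if l = [] then n0 else \<tau>n (hd l) (tl l) Z"
  define y0 where "y0 = ys 0"
  have y0': "ys 0 = y0" unfolding y0_def ..
  have ex: "(\<lambda>l Z. ?sx (y0 # l) Z) = \<tau>x y0" "(\<lambda>l Z. ?sn (y0 # l) Z) = \<tau>n y0" by auto
  have ev: "even (length (v @ [y0]))" using od by simp
  show "(\<forall>k. (\<forall>j<k. II_ok_od T W v ?sx ?sn ys Zs j) \<longrightarrow> I_ok_od T v ?sx ys Zs k) \<and>
        ((\<forall>k. II_ok_od T W v ?sx ?sn ys Zs k) \<longrightarrow> outcome v (play_od ?sx ys Zs) \<in> A)"
  proof (cases "II_ok_od T W v ?sx ?sn ys Zs 0")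
    case False
    have "I_ok_od T v ?sx ys Zs k" if "\<forall>j<k. II_ok_od T W v ?sx ?sn ys Zs j" for k
      using that False by (cases k) (auto simp: I_ok_od_def)
    then show ?thesis using False by blast
  next
    case True
    then have "y0 \<in> tail W n0" "v @ [y0] \<in> T"
      unfolding II_ok_od_def ns_od_def play_od_def game_stream_def using y0' by auto
    then have st: "I_strategy_in T W (v @ [y0]) A (\<lambda>l Z. ?sx (y0 # l) Z) (\<lambda>l Z. ?sn (y0 # l) Z)"
      unfolding ex using \<tau> by blast
    note S = st[unfolded I_strategy_in_even[OF ev], rule_format, of "\<lambda>i. ys (Suc i)" Zs]
    have A1: "I_ok_od T v ?sx ys Zs k" if "\<forall>j<k. II_ok_od T W v ?sx ?sn ys Zs j" for k
    proof (cases k)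
      case 0 then show ?thesis by (simp add: I_ok_od_def)
    next
      case (Suc k')
      have "\<forall>j\<le>k'. II_ok_ev T W (v @ [y0]) (\<lambda>l Z. ?sx (y0 # l) Z) (\<lambda>l Z. ?sn (y0 # l) Z) (\<lambda>i. ys (Suc i)) Zs j"
        using that Suc odd_tail_II_ok[where ys=ys and yz=y0 and Zs=Zs and \<sigma>x= ?sx and \<sigma>n= ?sn, OF y0', of T W v] by auto
      then have "I_ok_ev T (v @ [y0]) (\<lambda>l Z. ?sx (y0 # l) Z) (\<lambda>i. ys (Suc i)) Zs k'" using S by blast
      then show ?thesis using odd_tail_I_ok_iff[where ys=ys and yz=y0 and Zs=Zs and \<sigma>x= ?sx, OF y0'] Suc by simp
    qed
    have A2: "outcome v (play_od ?sx ys Zs) \<in> A" if "\<forall>k. II_ok_od T W v ?sx ?sn ys Zs k"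
    proof -
      have "\<forall>k. II_ok_ev T W (v @ [y0]) (\<lambda>l Z. ?sx (y0 # l) Z) (\<lambda>l Z. ?sn (y0 # l) Z) (\<lambda>i. ys (Suc i)) Zs k"
        using that odd_tail_II_ok[where ys=ys and yz=y0 and Zs=Zs and \<sigma>x= ?sx and \<sigma>n= ?sn, OF y0', of T W v] by auto
      then have "outcome (v @ [y0]) (play_ev (\<lambda>l Z. ?sx (y0 # l) Z) (\<lambda>i. ys (Suc i)) Zs) \<in> A" using S by blast
      then show ?thesis using odd_tail_outcome[where ys=ys and yz=y0 and Zs=Zs and \<sigma>x= ?sx, OF y0'] by simp
    qed
    show ?thesis using A1 A2 by blast
  qed
qed

lemma strategy_odd_successor:
  fixes \<sigma>x :: "'f::field vec list \<Rightarrow> 'f vec set list \<Rightarrow> 'f vec"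
    and \<sigma>n :: "'f vec list \<Rightarrow> 'f vec set list \<Rightarrow> nat" and v :: "'f vec list"
  assumes od: "odd (length v)" and st: "I_strategy_in T W v A \<sigma>x \<sigma>n"
    and y0: "y0 \<in> tail W (\<sigma>n [] [])" "v @ [y0] \<in> T"
  shows "I_strategy_in T W (v @ [y0]) A (\<lambda>l Z. \<sigma>x (y0 # l) Z) (\<lambda>l Z. \<sigma>n (y0 # l) Z)"
proof -
  have ev: "even (length (v @ [y0]))" using od by simp
  show ?thesis unfolding I_strategy_in_even[OF ev]
  proof (intro allI)
    fix ys' :: "nat \<Rightarrow> 'f vec" and Zs :: "nat \<Rightarrow> 'f vec set"
    define ys where "ys = case_nat y0 ys'"
    have ys0: "ys 0 = y0" unfolding ys_def by simp
    have ysS: "(\<lambda>i. ys (Suc i)) = ys'" unfolding ys_def by simp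
    note S = st[unfolded I_strategy_in_odd[OF od], rule_format, of ys Zs]
    have tr: "II_ok_od T W v \<sigma>x \<sigma>n ys Zs j"
      if "II_ok_ev T W (v @ [y0]) (\<lambda>l Z. \<sigma>x (y0 # l) Z) (\<lambda>l Z. \<sigma>n (y0 # l) Z) ys' Zs j" for j
      using odd_tail_II_ok_rev[where ys=ys and yz=y0 and Zs=Zs and \<sigma>x= \<sigma>x and \<sigma>n= \<sigma>n, OF ys0, of T W v j] that y0 unfolding ysS by blast
    show "(\<forall>k. (\<forall>j\<le>k. II_ok_ev T W (v @ [y0]) (\<lambda>l Z. \<sigma>x (y0 # l) Z) (\<lambda>l Z. \<sigma>n (y0 # l) Z) ys' Zs j) \<longrightarrow>
               I_ok_ev T (v @ [y0]) (\<lambda>l Z. \<sigma>x (y0 # l) Z) ys' Zs k) \<and>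
          ((\<forall>k. II_ok_ev T W (v @ [y0]) (\<lambda>l Z. \<sigma>x (y0 # l) Z) (\<lambda>l Z. \<sigma>n (y0 # l) Z) ys' Zs k) \<longrightarrow>
               outcome (v @ [y0]) (play_ev (\<lambda>l Z. \<sigma>x (y0 # l) Z) ys' Zs) \<in> A)"
    proof (intro conjI allI impI)
      fix k assume "\<forall>j\<le>k. II_ok_ev T W (v @ [y0]) (\<lambda>l Z. \<sigma>x (y0 # l) Z) (\<lambda>l Z. \<sigma>n (y0 # l) Z) ys' Zs j"
      then have "\<forall>j<Suc k. II_ok_od T W v \<sigma>x \<sigma>n ys Zs j" using tr by auto
      then have "I_ok_od T v \<sigma>x ys Zs (Suc k)" using S by blast
      then show "I_ok_ev T (v @ [y0]) (\<lambda>l Z. \<sigma>x (y0 # l) Z) ys' Zs k" using odd_tail_I_ok_iff[where ys=ys and yz=y0 and Zs=Zs and \<sigma>x= \<sigma>x, OF ys0] unfolding ysS by simp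
    next
      assume "\<forall>k. II_ok_ev T W (v @ [y0]) (\<lambda>l Z. \<sigma>x (y0 # l) Z) (\<lambda>l Z. \<sigma>n (y0 # l) Z) ys' Zs k"
      then have "\<forall>k. II_ok_od T W v \<sigma>x \<sigma>n ys Zs k" using tr by auto
      then have "outcome v (play_od \<sigma>x ys Zs) \<in> A" using S by blast
      then show "outcome (v @ [y0]) (play_ev (\<lambda>l Z. \<sigma>x (y0 # l) Z) ys' Zs) \<in> A" using odd_tail_outcome[where ys=ys and yz=y0 and Zs=Zs and \<sigma>x= \<sigma>x, OF ys0] unfolding ysS by simp
    qed
  qed
qed


lemma map_upt_add: "map f [0..<a + b] = map f [0..<a] @ map (\<lambda>i. f (a + i)) [0..<b]"
proof (induction b)
  case (Suc b) then show ?case by (simp add: add.assoc)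
qed simp

lemma drop_map_upt: "m \<le> k \<Longrightarrow> drop m (map f [0..<k]) = map (\<lambda>i. f (m + i)) [0..<k - m]"
  by (rule nth_equalityI) auto

lemma strategy_shift:
  fixes \<sigma>x :: "'f::field vec list \<Rightarrow> 'f vec set list \<Rightarrow> 'f vec" and \<sigma>n :: "'f vec list \<Rightarrow> 'f vec set list \<Rightarrow> nat"
    and \<tau>x :: "'f vec list \<Rightarrow> 'f vec set list \<Rightarrow> 'f vec" and \<tau>n :: "'f vec list \<Rightarrow> 'f vec set list \<Rightarrow> nat"
  assumes hx: "\<And>i. xs_ev \<sigma>x ys Zs (m + i) = xs_ev \<tau>x (\<lambda>i. ys (m + i)) (\<lambda>i. Zs (m + i)) i"
    and hn: "\<And>i. ns_ev \<sigma>n ys Zs (m + i) = ns_ev \<tau>n (\<lambda>i. ys (m + i)) (\<lambda>i. Zs (m + i)) i"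
    and hq: "v @ map (play_ev \<sigma>x ys Zs) [0..<2 * m] = q"
  shows "v @ map (play_ev \<sigma>x ys Zs) [0..<2 * m + j] = q @ map (play_ev \<tau>x (\<lambda>i. ys (m + i)) (\<lambda>i. Zs (m + i))) [0..<j]"
    and "II_ok_ev T W v \<sigma>x \<sigma>n ys Zs (m + i) \<Longrightarrow> II_ok_ev T W q \<tau>x \<tau>n (\<lambda>i. ys (m + i)) (\<lambda>i. Zs (m + i)) i"
    and "I_ok_ev T q \<tau>x (\<lambda>i. ys (m + i)) (\<lambda>i. Zs (m + i)) i \<Longrightarrow> I_ok_ev T v \<sigma>x ys Zs (m + i)"
    and "outcome v (play_ev \<sigma>x ys Zs) = outcome q (play_ev \<tau>x (\<lambda>i. ys (m + i)) (\<lambda>i. Zs (m + i)))"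
proof -
  let ?w = "play_ev \<sigma>x ys Zs" and ?wt = "play_ev \<tau>x (\<lambda>i. ys (m + i)) (\<lambda>i. Zs (m + i))"
  have ww: "?w (2 * m + j) = ?wt j" for j
  proof (cases "even j")
    case True
    then obtain i where i: "j = 2 * i" by (rule evenE)
    show ?thesis using i hx[of i] unfolding play_ev_def game_stream_def by simp
  next
    case False
    then obtain i where i: "j = Suc (2 * i)" by (metis oddE Suc_eq_plus1)
    show ?thesis using i unfolding play_ev_def game_stream_def by simp
  qed
  have wfun: "(\<lambda>i. ?w (2 * m + i)) = ?wt" using ww by (rule ext)
  show A: "v @ map ?w [0..<2 * m + j] = q @ map ?wt [0..<j]" for j
    unfolding map_upt_add[of ?w "2 * m" j] using hq wfun by simp
  show "II_ok_ev T W q \<tau>x \<tau>n (\<lambda>i. ys (m + i)) (\<lambda>i. Zs (m + i)) i" if "II_ok_ev T W v \<sigma>x \<sigma>n ys Zs (m + i)"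
  proof (cases i)
    case 0 then show ?thesis using that unfolding II_ok_ev_def by simp
  next
    case (Suc i')
    have e1: "m + i - 1 = m + i'" using Suc by simp
    have e2: "v @ map ?w [0..<2 * (m + i)] = q @ map ?wt [0..<2 * i]"
      using A[of "2 * i"] by (simp add: algebra_simps)
    show ?thesis using that Suc unfolding II_ok_ev_def e1 hn e2 by simp
  qed
  show "I_ok_ev T v \<sigma>x ys Zs (m + i)" if "I_ok_ev T q \<tau>x (\<lambda>i. ys (m + i)) (\<lambda>i. Zs (m + i)) i"
  proof -
    have e2: "v @ map ?w [0..<2 * (m + i) + 1] = q @ map ?wt [0..<2 * i + 1]"
      using A[of "2 * i + 1"] by (simp add: algebra_simps)
    show ?thesis using that unfolding I_ok_ev_def e2 hx by simp
  qed
  show "outcome v ?w = outcome q ?wt"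
    using outcome_shift[of v ?w "2 * m"] hq wfun by simp
qed

section \<open>Switching strategies\<close>

text \<open>Given a strategy for I with positions in S and, for each position
  q of T outside S, a strategy in the T-game from q, the switched strategy follows the first
  one until the play first leaves S and then the strategy attached to the position reached.\<close>
definition strategy_position ::
  "('f vec list \<Rightarrow> 'f vec set list \<Rightarrow> 'f vec) \<Rightarrow> 'f vec list \<Rightarrow> 'f vec list \<Rightarrow> 'f vec set list \<Rightarrow> nat \<Rightarrow> 'f vec list" where
  "strategy_position \<sigma>x v ysl Zsl j = v @ concat (map (\<lambda>i. [\<sigma>x (take i ysl) (take (Suc i) Zsl), ysl ! i]) [0..<j])"

definition exits_at ::
  "'f vec list set \<Rightarrow> ('f vec list \<Rightarrow> 'f vec set list \<Rightarrow> 'f vec) \<Rightarrow> 'f vec list \<Rightarrow> 'f vec list \<Rightarrow> 'f vec set list \<Rightarrow> nat \<Rightarrow> bool" where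
  "exits_at S \<sigma>x v ysl Zsl j \<longleftrightarrow> j < length ysl \<and> strategy_position \<sigma>x v ysl Zsl (Suc j) \<notin> S"

definition switch_vec ::
  "'f vec list set \<Rightarrow> ('f vec list \<Rightarrow> 'f vec set list \<Rightarrow> 'f vec) \<Rightarrow> ('f vec list \<Rightarrow> 'f vec list \<Rightarrow> 'f vec set list \<Rightarrow> 'f vec)
   \<Rightarrow> 'f vec list \<Rightarrow> 'f vec list \<Rightarrow> 'f vec set list \<Rightarrow> 'f vec" where
  "switch_vec S \<sigma>x \<tau>x v ysl Zsl = (if (\<exists>j. exits_at S \<sigma>x v ysl Zsl j)
     then \<tau>x (strategy_position \<sigma>x v ysl Zsl (Suc (LEAST j. exits_at S \<sigma>x v ysl Zsl j)))
            (drop (Suc (LEAST j. exits_at S \<sigma>x v ysl Zsl j)) ysl) (drop (Suc (LEAST j. exits_at S \<sigma>x v ysl Zsl j)) Zsl)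
     else \<sigma>x ysl Zsl)"

definition switch_bound ::
  "'f vec list set \<Rightarrow> ('f vec list \<Rightarrow> 'f vec set list \<Rightarrow> 'f vec) \<Rightarrow> ('f vec list \<Rightarrow> 'f vec set list \<Rightarrow> nat)
   \<Rightarrow> ('f vec list \<Rightarrow> 'f vec list \<Rightarrow> 'f vec set list \<Rightarrow> nat) \<Rightarrow> 'f vec list \<Rightarrow> 'f vec list \<Rightarrow> 'f vec set list \<Rightarrow> nat" where
  "switch_bound S \<sigma>x \<sigma>n \<tau>n v ysl Zsl = (if (\<exists>j. exits_at S \<sigma>x v ysl Zsl j)
     then \<tau>n (strategy_position \<sigma>x v ysl Zsl (Suc (LEAST j. exits_at S \<sigma>x v ysl Zsl j)))
            (drop (Suc (LEAST j. exits_at S \<sigma>x v ysl Zsl j)) ysl) (drop (Suc (LEAST j. exits_at S \<sigma>x v ysl Zsl j)) Zsl)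
     else \<sigma>n ysl Zsl)"

lemma concat_rounds: "concat (map (\<lambda>i. [xs_ev \<sigma>x ys Zs i, ys i]) [0..<j]) = map (play_ev \<sigma>x ys Zs) [0..<2 * j]"
proof (induction j)
  case (Suc j)
  have "map (play_ev \<sigma>x ys Zs) [0..<2 * Suc j] =
        map (play_ev \<sigma>x ys Zs) [0..<2 * j] @ [play_ev \<sigma>x ys Zs (2 * j), play_ev \<sigma>x ys Zs (Suc (2 * j))]"
    by simp
  then show ?case using Suc unfolding play_ev_def by simp
qed simp

lemma strategy_position_eq:
  assumes "j \<le> k" "j \<le> K"
  shows "strategy_position \<sigma>x v (map ys [0..<k]) (map Zs [0..<K]) j = v @ map (play_ev \<sigma>x ys Zs) [0..<2 * j]"
proof -
  have "map (\<lambda>i. [\<sigma>x (take i (map ys [0..<k])) (take (Suc i) (map Zs [0..<K])), map ys [0..<k] ! i]) [0..<j]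
      = map (\<lambda>i. [xs_ev \<sigma>x ys Zs i, ys i]) [0..<j]"
    using assms by (auto simp: xs_ev_def take_map)
  then show ?thesis by (simp only: strategy_position_def concat_rounds)
qed

lemma exits_at_iff:
  assumes "k \<le> K"
  shows "exits_at S \<sigma>x v (map ys [0..<k]) (map Zs [0..<K]) j \<longleftrightarrow>
         j < k \<and> v @ map (play_ev \<sigma>x ys Zs) [0..<2 * Suc j] \<notin> S"
  unfolding exits_at_def using strategy_position_eq[of "Suc j" k K \<sigma>x v ys Zs] assms by auto

lemma switch_before_exit:
  assumes "k \<le> K" "\<forall>j<k. v @ map (play_ev \<sigma>x ys Zs) [0..<2 * Suc j] \<in> S"
  shows "switch_vec S \<sigma>x \<tau>x v (map ys [0..<k]) (map Zs [0..<K]) = \<sigma>x (map ys [0..<k]) (map Zs [0..<K]) \<and>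
         switch_bound S \<sigma>x \<sigma>n \<tau>n v (map ys [0..<k]) (map Zs [0..<K]) = \<sigma>n (map ys [0..<k]) (map Zs [0..<K])"
proof -
  have no_exit: "(\<exists>j. exits_at S \<sigma>x v (map ys [0..<k]) (map Zs [0..<K]) j) = False"
    using exits_at_iff[OF assms(1)] assms(2) by blast
  show ?thesis by (simp only: switch_vec_def switch_bound_def no_exit if_False)
qed

lemma switch_after_exit:
  assumes "k \<le> K" "e < k" "v @ map (play_ev \<sigma>x ys Zs) [0..<2 * Suc e] \<notin> S"
    and "\<forall>j<e. v @ map (play_ev \<sigma>x ys Zs) [0..<2 * Suc j] \<in> S"
  shows "switch_vec S \<sigma>x \<tau>x v (map ys [0..<k]) (map Zs [0..<K]) =
           \<tau>x (v @ map (play_ev \<sigma>x ys Zs) [0..<2 * Suc e]) (drop (Suc e) (map ys [0..<k])) (drop (Suc e) (map Zs [0..<K])) \<and>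
         switch_bound S \<sigma>x \<sigma>n \<tau>n v (map ys [0..<k]) (map Zs [0..<K]) =
           \<tau>n (v @ map (play_ev \<sigma>x ys Zs) [0..<2 * Suc e]) (drop (Suc e) (map ys [0..<k])) (drop (Suc e) (map Zs [0..<K]))"
proof -
  let ?ex = "exits_at S \<sigma>x v (map ys [0..<k]) (map Zs [0..<K])"
  have ex: "?ex e" using exits_at_iff[OF assms(1)] assms(2,3) by blast
  have least: "(LEAST j. ?ex j) = e"
  proof (rule Least_equality[where P="?ex", OF ex])
    fix j assume "?ex j"
    then show "e \<le> j" using exits_at_iff[OF assms(1)] assms(4) by (meson not_le)
  qed
  have pos: "strategy_position \<sigma>x v (map ys [0..<k]) (map Zs [0..<K]) (Suc e) = v @ map (play_ev \<sigma>x ys Zs) [0..<2 * Suc e]"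
    using strategy_position_eq[of "Suc e" k K \<sigma>x v ys Zs] assms(1,2) by simp
  show ?thesis unfolding switch_vec_def switch_bound_def least pos using ex by auto
qed

lemma switch_play_moves:
  assumes exit: "v @ map (play_ev \<sigma>x ys Zs) [0..<2 * Suc e] \<notin> S"
    and before: "\<forall>j<e. v @ map (play_ev \<sigma>x ys Zs) [0..<2 * Suc j] \<in> S"
  defines "q \<equiv> v @ map (play_ev \<sigma>x ys Zs) [0..<2 * Suc e]"
  shows "k \<le> e \<Longrightarrow> xs_ev (switch_vec S \<sigma>x \<tau>x v) ys Zs k = xs_ev \<sigma>x ys Zs k"
    and "k \<le> e \<Longrightarrow> ns_ev (switch_bound S \<sigma>x \<sigma>n \<tau>n v) ys Zs k = ns_ev \<sigma>n ys Zs k"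
    and "xs_ev (switch_vec S \<sigma>x \<tau>x v) ys Zs (Suc e + i) = xs_ev (\<tau>x q) (\<lambda>i. ys (Suc e + i)) (\<lambda>i. Zs (Suc e + i)) i"
    and "ns_ev (switch_bound S \<sigma>x \<sigma>n \<tau>n v) ys Zs (Suc e + i) = ns_ev (\<tau>n q) (\<lambda>i. ys (Suc e + i)) (\<lambda>i. Zs (Suc e + i)) i"
    and "j < 2 * Suc e \<Longrightarrow> play_ev (switch_vec S \<sigma>x \<tau>x v) ys Zs j = play_ev \<sigma>x ys Zs j"
proof -
  have low: "xs_ev (switch_vec S \<sigma>x \<tau>x v) ys Zs k = xs_ev \<sigma>x ys Zs k \<and>
             ns_ev (switch_bound S \<sigma>x \<sigma>n \<tau>n v) ys Zs k = ns_ev \<sigma>n ys Zs k" if "k \<le> e" for k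
  proof -
    have "\<forall>j<k. v @ map (play_ev \<sigma>x ys Zs) [0..<2 * Suc j] \<in> S" using before that by simp
    then show ?thesis
      using switch_before_exit[where k=k and K="Suc k" and v=v and \<sigma>x=\<sigma>x and ys=ys and Zs=Zs and S=S
          and \<tau>x=\<tau>x and \<sigma>n=\<sigma>n and \<tau>n=\<tau>n]
      unfolding xs_ev_def ns_ev_def by simp
  qed
  then show "k \<le> e \<Longrightarrow> xs_ev (switch_vec S \<sigma>x \<tau>x v) ys Zs k = xs_ev \<sigma>x ys Zs k"
    and "k \<le> e \<Longrightarrow> ns_ev (switch_bound S \<sigma>x \<sigma>n \<tau>n v) ys Zs k = ns_ev \<sigma>n ys Zs k" by blast+
  show "xs_ev (switch_vec S \<sigma>x \<tau>x v) ys Zs (Suc e + i) = xs_ev (\<tau>x q) (\<lambda>i. ys (Suc e + i)) (\<lambda>i. Zs (Suc e + i)) i"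
    and "ns_ev (switch_bound S \<sigma>x \<sigma>n \<tau>n v) ys Zs (Suc e + i) = ns_ev (\<tau>n q) (\<lambda>i. ys (Suc e + i)) (\<lambda>i. Zs (Suc e + i)) i"
    using switch_after_exit[where k="Suc e + i" and K="Suc (Suc e + i)" and e=e and \<tau>x=\<tau>x and \<sigma>n=\<sigma>n
        and \<tau>n=\<tau>n, OF _ _ exit before]
      drop_map_upt[of "Suc e" "Suc e + i" ys] drop_map_upt[of "Suc e" "Suc (Suc e + i)" Zs]
    unfolding xs_ev_def ns_ev_def q_def by simp_all
  show "play_ev (switch_vec S \<sigma>x \<tau>x v) ys Zs j = play_ev \<sigma>x ys Zs j" if "j < 2 * Suc e"
  proof (cases "even j")
    case True
    then obtain k where "j = 2 * k" by (rule evenE)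
    then show ?thesis using low[of k] that unfolding play_ev_def by simp
  next
    case False
    then obtain k where "j = Suc (2 * k)" by (metis oddE Suc_eq_plus1)
    then show ?thesis unfolding play_ev_def by simp
  qed
qed

context
  fixes S T :: "'f::field vec list set" and W :: "'f vec set" and A :: "(nat \<Rightarrow> 'f vec) set"
    and v :: "'f vec list" and \<sigma>x :: "'f vec list \<Rightarrow> 'f vec set list \<Rightarrow> 'f vec"
    and \<sigma>n :: "'f vec list \<Rightarrow> 'f vec set list \<Rightarrow> nat"
    and \<tau>x :: "'f vec list \<Rightarrow> 'f vec list \<Rightarrow> 'f vec set list \<Rightarrow> 'f vec"
    and \<tau>n :: "'f vec list \<Rightarrow> 'f vec list \<Rightarrow> 'f vec set list \<Rightarrow> nat"
    and ys :: "nat \<Rightarrow> 'f vec" and Zs :: "nat \<Rightarrow> 'f vec set"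
  assumes ev: "even (length v)" and ST: "S \<subseteq> T" and st: "I_strategy_in S W v A \<sigma>x \<sigma>n"
    and \<tau>: "\<And>q. q \<in> T \<Longrightarrow> prefix v q \<Longrightarrow> q \<notin> S \<Longrightarrow> even (length q) \<Longrightarrow> I_strategy_in T W q A (\<tau>x q) (\<tau>n q)"
begin

lemma switch_play_inside:
  assumes inside: "\<forall>j. v @ map (play_ev \<sigma>x ys Zs) [0..<2 * Suc j] \<in> S"
  shows "(\<forall>k. (\<forall>j\<le>k. II_ok_ev T W v (switch_vec S \<sigma>x \<tau>x v) (switch_bound S \<sigma>x \<sigma>n \<tau>n v) ys Zs j) \<longrightarrow>
              I_ok_ev T v (switch_vec S \<sigma>x \<tau>x v) ys Zs k) \<and>
         ((\<forall>k. II_ok_ev T W v (switch_vec S \<sigma>x \<tau>x v) (switch_bound S \<sigma>x \<sigma>n \<tau>n v) ys Zs k) \<longrightarrow>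
              outcome v (play_ev (switch_vec S \<sigma>x \<tau>x v) ys Zs) \<in> A)"
proof -
  let ?sx = "switch_vec S \<sigma>x \<tau>x v" and ?sn = "switch_bound S \<sigma>x \<sigma>n \<tau>n v"
  note S_wins = st[unfolded I_strategy_in_even[OF ev], rule_format, of ys Zs]
  have xs_k: "xs_ev ?sx ys Zs k = xs_ev \<sigma>x ys Zs k" and ns: "ns_ev ?sn ys Zs k = ns_ev \<sigma>n ys Zs k" for k
    using switch_before_exit[where k=k and K="Suc k" and v=v and \<sigma>x=\<sigma>x and ys=ys and Zs=Zs and S=S
        and \<tau>x=\<tau>x and \<sigma>n=\<sigma>n and \<tau>n=\<tau>n] inside
    unfolding xs_ev_def ns_ev_def by simp_all
  have xs: "xs_ev ?sx ys Zs = xs_ev \<sigma>x ys Zs" using xs_k by (rule ext)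
  have play: "play_ev ?sx ys Zs = play_ev \<sigma>x ys Zs" unfolding play_ev_def xs ..
  have II: "II_ok_ev S W v \<sigma>x \<sigma>n ys Zs j" if "II_ok_ev T W v ?sx ?sn ys Zs j" for j
  proof (cases j)
    case (Suc j')
    have "v @ map (play_ev \<sigma>x ys Zs) [0..<2 * j] \<in> S" using inside unfolding Suc by blast
    then show ?thesis using that unfolding II_ok_ev_def ns play by simp
  qed (use that in \<open>simp add: II_ok_ev_def\<close>)
  have I: "I_ok_ev T v ?sx ys Zs k" if "I_ok_ev S v \<sigma>x ys Zs k" for k
    using that ST unfolding I_ok_ev_def xs play by auto
  show ?thesis using S_wins II I play by metis
qed

lemma switch_play_exit:
  assumes exit: "v @ map (play_ev \<sigma>x ys Zs) [0..<2 * Suc e] \<notin> S"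
    and before: "\<forall>j<e. v @ map (play_ev \<sigma>x ys Zs) [0..<2 * Suc j] \<in> S"
  shows "(\<forall>k. (\<forall>j\<le>k. II_ok_ev T W v (switch_vec S \<sigma>x \<tau>x v) (switch_bound S \<sigma>x \<sigma>n \<tau>n v) ys Zs j) \<longrightarrow>
              I_ok_ev T v (switch_vec S \<sigma>x \<tau>x v) ys Zs k) \<and>
         ((\<forall>k. II_ok_ev T W v (switch_vec S \<sigma>x \<tau>x v) (switch_bound S \<sigma>x \<sigma>n \<tau>n v) ys Zs k) \<longrightarrow>
              outcome v (play_ev (switch_vec S \<sigma>x \<tau>x v) ys Zs) \<in> A)"
proof -
  let ?sx = "switch_vec S \<sigma>x \<tau>x v" and ?sn = "switch_bound S \<sigma>x \<sigma>n \<tau>n v"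
  let ?w = "play_ev \<sigma>x ys Zs" and ?w' = "play_ev ?sx ys Zs"
  note S_wins = st[unfolded I_strategy_in_even[OF ev], rule_format, of ys Zs]
  define m where "m = Suc e"
  define q where "q = v @ map ?w [0..<2 * m]"
  let ?ysm = "\<lambda>i. ys (m + i)" and ?Zsm = "\<lambda>i. Zs (m + i)"
  note moves = switch_play_moves[OF exit before, folded m_def, folded q_def]
  have low_ns: "ns_ev ?sn ys Zs k = ns_ev \<sigma>n ys Zs k" if "k < m" for k
    using moves(2) that unfolding m_def by simp
  have low_play: "?w' j = ?w j" if "j < 2 * m" for j using moves(5) that .
  have q: "v @ map ?w' [0..<2 * m] = q" unfolding q_def using low_play by simp
  note shift = strategy_shift[of ?sx ys Zs m "\<tau>x q" ?sn "\<tau>n q", OF moves(3,4) q]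
  have evq: "even (length q)" unfolding q_def using ev by simp
  have low_II: "II_ok_ev S W v \<sigma>x \<sigma>n ys Zs j" if "II_ok_ev T W v ?sx ?sn ys Zs j" "j \<le> e" for j
  proof (cases j)
    case (Suc j')
    then have "v @ map ?w [0..<2 * j] \<in> S" "ns_ev ?sn ys Zs j' = ns_ev \<sigma>n ys Zs j'"
      using before low_ns that(2) unfolding m_def by auto
    moreover have "v @ map ?w' [0..<2 * j] = v @ map ?w [0..<2 * j]" using low_play that(2) unfolding m_def by simp
    ultimately show ?thesis using that(1) unfolding II_ok_ev_def Suc by simp
  qed (use that in \<open>simp add: II_ok_ev_def\<close>)
  have low_I: "I_ok_ev T v ?sx ys Zs k" if "I_ok_ev S v \<sigma>x ys Zs k" "k \<le> e" for k
  proof -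
    have eq: "v @ map ?w' [0..<2 * k + 1] = v @ map ?w [0..<2 * k + 1]"
      using low_play that(2) unfolding m_def by simp
    show ?thesis using that(1) ST moves(1)[OF that(2)] unfolding I_ok_ev_def eq by auto
  qed
  have \<tau>q: "I_strategy_in T W q A (\<tau>x q) (\<tau>n q)" if "II_ok_ev T W v ?sx ?sn ys Zs m"
  proof (rule \<tau>)
    show "q \<in> T" using that q unfolding II_ok_ev_def m_def by simp
    show "prefix v q" unfolding q_def by simp
    show "q \<notin> S" using exit unfolding q_def m_def .
  qed (rule evq)
  have "I_ok_ev T v ?sx ys Zs k" if all: "\<forall>j\<le>k. II_ok_ev T W v ?sx ?sn ys Zs j" for k
  proof (cases "k \<le> e")
    case True
    then show ?thesis using S_wins all low_II low_I by simp
  next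
    case False
    then obtain i where i: "k = m + i" unfolding m_def by (metis less_eqE not_less_eq_eq)
    note \<tau>_wins = \<tau>q[unfolded I_strategy_in_even[OF evq], rule_format, of ?ysm ?Zsm]
    have "\<forall>j\<le>i. II_ok_ev T W q (\<tau>x q) (\<tau>n q) ?ysm ?Zsm j" using all i shift(2) by simp
    then show ?thesis using \<tau>_wins all i shift(3) by simp
  qed
  moreover have "outcome v ?w' \<in> A" if all: "\<forall>k. II_ok_ev T W v ?sx ?sn ys Zs k"
  proof -
    note \<tau>_wins = \<tau>q[OF all[rule_format, of m], unfolded I_strategy_in_even[OF evq], rule_format, of ?ysm ?Zsm]
    have "\<forall>j. II_ok_ev T W q (\<tau>x q) (\<tau>n q) ?ysm ?Zsm j" using all shift(2) by simp
    then show ?thesis using \<tau>_wins shift(4) by simp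
  qed
  ultimately show ?thesis by blast
qed

end

lemma strategy_switch_even:
  fixes \<tau>x :: "'f::field vec list \<Rightarrow> 'f vec list \<Rightarrow> 'f vec set list \<Rightarrow> 'f vec"
    and \<tau>n :: "'f vec list \<Rightarrow> 'f vec list \<Rightarrow> 'f vec set list \<Rightarrow> nat"
  assumes ev: "even (length v)" and ST: "S \<subseteq> T" and st: "I_strategy_in S W v A \<sigma>x \<sigma>n"
    and \<tau>: "\<And>q. q \<in> T \<Longrightarrow> prefix v q \<Longrightarrow> q \<notin> S \<Longrightarrow> even (length q) \<Longrightarrow> I_strategy_in T W q A (\<tau>x q) (\<tau>n q)"
  shows "I_strategy_in T W v A (switch_vec S \<sigma>x \<tau>x v) (switch_bound S \<sigma>x \<sigma>n \<tau>n v)"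
  unfolding I_strategy_in_even[OF ev]
proof (intro allI)
  fix ys Zs
  let ?exit = "\<lambda>j. v @ map (play_ev \<sigma>x ys Zs) [0..<2 * Suc j] \<notin> S"
  show "(\<forall>k. (\<forall>j\<le>k. II_ok_ev T W v (switch_vec S \<sigma>x \<tau>x v) (switch_bound S \<sigma>x \<sigma>n \<tau>n v) ys Zs j) \<longrightarrow>
              I_ok_ev T v (switch_vec S \<sigma>x \<tau>x v) ys Zs k) \<and>
         ((\<forall>k. II_ok_ev T W v (switch_vec S \<sigma>x \<tau>x v) (switch_bound S \<sigma>x \<sigma>n \<tau>n v) ys Zs k) \<longrightarrow>
              outcome v (play_ev (switch_vec S \<sigma>x \<tau>x v) ys Zs) \<in> A)"
  proof (cases "\<exists>j. ?exit j")
    case False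
    then show ?thesis using switch_play_inside[OF ev ST st \<tau>] by blast
  next
    case True
    define e where "e = (LEAST j. ?exit j)"
    have "?exit e" unfolding e_def using True by (rule LeastI_ex)
    moreover have "\<forall>j<e. \<not> ?exit j" unfolding e_def using not_less_Least by blast
    ultimately show ?thesis using switch_play_exit[OF ev ST st \<tau>] by blast
  qed
qed

lemma has_strategy_odd_from_successors:
  fixes v :: "'f::field vec list"
  assumes od: "odd (length v)"
    and successors: "\<And>y. y \<in> tail W n0 \<Longrightarrow> v @ [y] \<in> T \<Longrightarrow> I_has_strategy T W (v @ [y]) A"
  shows "I_has_strategy T W v A"
proof -
  define \<tau> where "\<tau> y = (SOME p. I_strategy_in T W (v @ [y]) A (fst p) (snd p))" for y
  have \<tau>: "I_strategy_in T W (v @ [y]) A (fst (\<tau> y)) (snd (\<tau> y))" if "y \<in> tail W n0" "v @ [y] \<in> T" for y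
  proof -
    have "\<exists>p. I_strategy_in T W (v @ [y]) A (fst p) (snd p)"
      using successors[OF that] unfolding I_has_strategy_def by auto
    then show ?thesis unfolding \<tau>_def by (rule someI_ex)
  qed
  have "I_strategy_in T W v A (\<lambda>l Z. fst (\<tau> (hd l)) (tl l) Z)
          (\<lambda>l Z. if l = [] then n0 else snd (\<tau> (hd l)) (tl l) Z)"
    by (rule strategy_odd_from_successors[where \<tau>x="\<lambda>y. fst (\<tau> y)" and \<tau>n="\<lambda>y. snd (\<tau> y)"])
       (use od \<tau> in auto)
  then show ?thesis unfolding I_has_strategy_def by blast
qed

text \<open>Winning positions are winning in the sense of strategies: from even positions I follows
  the quasi-strategy; from odd positions he demands II's first move beyond the bound of the
  quasi-strategy and then follows the quasi-strategy restricted to the position reached.\<close>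
lemma I_wins_from_has_strategy:
  fixes v :: "'f::field vec list"
  assumes "I_wins_from T W A v"
  shows "I_has_strategy T W v A"
proof -
  obtain P where QS: "quasi_strategy T W A v P" using assms unfolding I_wins_from_def by blast
  show ?thesis
  proof (cases "even (length v)")
    case True
    then show ?thesis using quasi_strategy_strategy_even[OF QS True] unfolding I_has_strategy_def by blast
  next
    case False
    show ?thesis
    proof (rule has_strategy_odd_from_successors[OF False])
      fix y assume "y \<in> tail W (qs_bound T W P v)" "v @ [y] \<in> T"
      then have "v @ [y] \<in> P" using qs_bound_spec[OF QS quasi_strategy_root[OF QS] False] by blast
      then have "quasi_strategy T W A (v @ [y]) {r \<in> P. prefix (v @ [y]) r}"
        by (rule quasi_strategy_restrict[OF QS])
      moreover have "even (length (v @ [y]))" using False by simp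
      ultimately show "I_has_strategy T W (v @ [y]) A"
        using quasi_strategy_strategy_even unfolding I_has_strategy_def by blast
    qed
  qed
qed

lemma has_strategy_switch_even:
  fixes v :: "'f::field vec list"
  assumes ev: "even (length v)" and ST: "S \<subseteq> T" and st: "I_strategy_in S W v A \<sigma>x \<sigma>n"
    and ex: "\<And>q. q \<in> T \<Longrightarrow> prefix v q \<Longrightarrow> q \<notin> S \<Longrightarrow> I_has_strategy T W q A"
  shows "I_has_strategy T W v A"
proof -
  define \<tau> where "\<tau> q = (SOME p. I_strategy_in T W q A (fst p) (snd p))" for q
  have \<tau>: "I_strategy_in T W q A (fst (\<tau> q)) (snd (\<tau> q))" if "q \<in> T" "prefix v q" "q \<notin> S" for q
  proof -
    have "\<exists>p. I_strategy_in T W q A (fst p) (snd p)" using ex[OF that] unfolding I_has_strategy_def by auto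
    then show ?thesis unfolding \<tau>_def by (rule someI_ex)
  qed
  have "I_strategy_in T W v A (switch_vec S \<sigma>x (\<lambda>q. fst (\<tau> q)) v) (switch_bound S \<sigma>x \<sigma>n (\<lambda>q. snd (\<tau> q)) v)"
    by (rule strategy_switch_even[OF ev ST st]) (use \<tau> in auto)
  then show ?thesis unfolding I_has_strategy_def by blast
qed

text \<open>For |v| odd
  we first let II make his move.\<close>
lemma has_strategy_switch:
  fixes v :: "'f::field vec list"
  assumes ST: "S \<subseteq> T" and st: "I_strategy_in S W v A \<sigma>x \<sigma>n"
    and ex: "\<And>q. q \<in> T \<Longrightarrow> prefix v q \<Longrightarrow> q \<notin> S \<Longrightarrow> I_has_strategy T W q A"
  shows "I_has_strategy T W v A"
proof (cases "even (length v)")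
  case True then show ?thesis using has_strategy_switch_even[OF True ST st ex] by blast
next
  case False
  show ?thesis
  proof (rule has_strategy_odd_from_successors[OF False])
    fix y assume y: "y \<in> tail W (\<sigma>n [] [])" "v @ [y] \<in> T"
    show "I_has_strategy T W (v @ [y]) A"
    proof (cases "v @ [y] \<in> S")
      case True
      have st': "I_strategy_in S W (v @ [y]) A (\<lambda>l Z. \<sigma>x (y # l) Z) (\<lambda>l Z. \<sigma>n (y # l) Z)"
        by (rule strategy_odd_successor[OF False st]) (use y True in auto)
      have ev: "even (length (v @ [y]))" using False by simp
      show ?thesis
      proof (rule has_strategy_switch_even[OF ev ST st'])
        fix q assume q: "q \<in> T" "prefix (v @ [y]) q" "q \<notin> S"
        then show "I_has_strategy T W q A" using ex append_prefixD by blast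
      qed
    next
      case False
      then show ?thesis using ex[OF y(2)] by simp
    qed
  qed
qed

section \<open>The pruned rule\<close>

text \<open>For each p the property "p is winning
  in Y, or in no block subspace of Y" is dense, and stable under almost-inclusion because
  winning is.\<close>
lemma decide_winning_positions:
  fixes V :: "'f::{field,countable} vec set"
  assumes V: "block_subspace V"
  shows "\<exists>X0. block_subspace X0 \<and> X0 \<subseteq> V \<and>
           (\<forall>p W. block_subspace W \<and> W \<subseteq> X0 \<and> I_wins_from T W A p \<longrightarrow> I_wins_from T X0 A p)"
proof -
  define Q where "Q p Y \<longleftrightarrow> I_wins_from T Y A p \<or>
      (\<forall>W. block_subspace W \<and> W \<subseteq> Y \<longrightarrow> \<not> I_wins_from T W A p)" for p Y
  have "\<exists>X0. block_subspace X0 \<and> X0 \<subseteq> V \<and> (\<forall>p. Q p X0)"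
  proof (rule fusion_positions[OF V])
    fix p and Y :: "'f vec set" assume "block_subspace Y"
    then show "\<exists>Y'. block_subspace Y' \<and> Y' \<subseteq> Y \<and> Q p Y'" unfolding Q_def by blast
  next
    fix p and Y Z :: "'f vec set" and M
    assume QY: "Q p Y" and Y: "block_subspace Y" and Z: "block_subspace Z" and ZY: "tail Z M \<subseteq> Y"
    show "Q p Z"
    proof (cases "I_wins_from T Y A p")
      case True then show ?thesis using I_wins_from_almost_subspace[OF True Y ZY] unfolding Q_def by blast
    next
      case False
      have "\<not> I_wins_from T W A p" if W: "block_subspace W" "W \<subseteq> Z" for W
      proof
        assume "I_wins_from T W A p"
        moreover obtain W' where "block_subspace W'" "W' \<subseteq> W" "W' \<subseteq> Y"
          using block_subspace_inside[OF Y W ZY] by blast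
        ultimately show False using QY False I_wins_from_mono unfolding Q_def by blast
      qed
      then show ?thesis unfolding Q_def by blast
    qed
  qed
  then show ?thesis unfolding Q_def using I_wins_from_mono by blast
qed

lemma decide_vector_sets:
  fixes X0 :: "'f::{field,countable} vec set" and B :: "'f vec list \<Rightarrow> 'f vec set"
  assumes X0: "block_subspace X0"
  shows "\<exists>X. block_subspace X \<and> X \<subseteq> X0 \<and>
           (\<forall>p. (\<exists>m. tail X m \<inter> B p = {}) \<or> (\<forall>Y. block_subspace Y \<and> Y \<subseteq> X \<longrightarrow> Y \<inter> B p \<noteq> {}))"
proof (rule fusion_positions[OF X0])
  fix p and Y :: "'f vec set" assume Y: "block_subspace Y"
  show "\<exists>Y'. block_subspace Y' \<and> Y' \<subseteq> Y \<and>
          ((\<exists>m. tail Y' m \<inter> B p = {}) \<or> (\<forall>Y''. block_subspace Y'' \<and> Y'' \<subseteq> Y' \<longrightarrow> Y'' \<inter> B p \<noteq> {}))"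
  proof (cases "\<exists>Y'. block_subspace Y' \<and> Y' \<subseteq> Y \<and> Y' \<inter> B p = {}")
    case True
    then obtain Y' where "block_subspace Y'" "Y' \<subseteq> Y" "Y' \<inter> B p = {}" by blast
    moreover have "tail Y' 0 \<subseteq> Y'" unfolding tail_def by blast
    ultimately show ?thesis by blast
  qed (use Y in blast)
next
  fix p and Y Z :: "'f vec set" and M
  assume BY: "(\<exists>m. tail Y m \<inter> B p = {}) \<or> (\<forall>Y'. block_subspace Y' \<and> Y' \<subseteq> Y \<longrightarrow> Y' \<inter> B p \<noteq> {})"
    and Y: "block_subspace Y" and Z: "block_subspace Z" and ZY: "tail Z M \<subseteq> Y"
  show "(\<exists>m. tail Z m \<inter> B p = {}) \<or> (\<forall>Y'. block_subspace Y' \<and> Y' \<subseteq> Z \<longrightarrow> Y' \<inter> B p \<noteq> {})"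
  proof (cases "\<exists>m. tail Y m \<inter> B p = {}")
    case True
    then obtain m where "tail Y m \<inter> B p = {}" by blast
    then have "tail Z (max m M) \<inter> B p = {}" using tail_inside[OF ZY] by blast
    then show ?thesis by blast
  next
    case False
    have "Y' \<inter> B p \<noteq> {}" if Y': "block_subspace Y'" "Y' \<subseteq> Z" for Y'
    proof -
      obtain W where "block_subspace W" "W \<subseteq> Y'" "W \<subseteq> Y" using block_subspace_inside[OF Y Y' ZY] by blast
      then show ?thesis using BY False by blast
    qed
    then show ?thesis by blast
  qed
qed

definition losing_positions ::
  "'f::field vec list set \<Rightarrow> 'f vec set \<Rightarrow> (nat \<Rightarrow> 'f vec) set \<Rightarrow> 'f vec list \<Rightarrow> 'f vec list set" where
  "losing_positions T X0 A v = {p \<in> T. prefix v p \<and> \<not> I_wins_from T X0 A p}"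

text \<open>At a losing position of odd length, every block subspace Z of X0 offers a move staying
  losing: otherwise all moves from Z are winning, hence so is the position, in Z and thus in X0.\<close>
lemma losing_positions_odd:
  assumes decided: "\<forall>p W. block_subspace W \<and> W \<subseteq> X0 \<and> I_wins_from T W A p \<longrightarrow> I_wins_from T X0 A p"
    and y: "y \<in> losing_positions T X0 A v" "odd (length y)"
    and Z: "block_subspace Z" "Z \<subseteq> X0"
  shows "\<exists>z\<in>Z. y @ [z] \<in> losing_positions T X0 A v"
proof (rule ccontr)
  assume "\<not> ?thesis"
  then have "\<forall>z\<in>tail Z 0. y @ [z] \<in> T \<longrightarrow> I_wins_from T Z A (y @ [z])"
    using y(1) Z(2) I_wins_from_mono unfolding losing_positions_def tail_def by fastforce
  then have "I_wins_from T Z A y"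
    using I_wins_from_successors[of y T] y unfolding losing_positions_def by blast
  then show False using decided Z y(1) unfolding losing_positions_def by blast
qed

text \<open>The far moves are
  legal in T; if they could not be chosen losing, the vectors leading to winning positions
  would meet every block subspace of X, and the position would be winning.\<close>
lemma losing_positions_even:
  assumes rule: "is_rule V v T" and XV: "X \<subseteq> X0" "X0 \<subseteq> V"
    and decided: "\<forall>p W. block_subspace W \<and> W \<subseteq> X0 \<and> I_wins_from T W A p \<longrightarrow> I_wins_from T X0 A p"
    and X: "block_subspace X"
    and dichotomy: "(\<exists>m. tail X m \<inter> {x. y @ [x] \<in> T \<and> I_wins_from T X0 A (y @ [x])} = {}) \<or>
        (\<forall>Y. block_subspace Y \<and> Y \<subseteq> X \<longrightarrow> Y \<inter> {x. y @ [x] \<in> T \<and> I_wins_from T X0 A (y @ [x])} \<noteq> {})"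
    and y: "y \<in> losing_positions T X0 A v" "even (length y)"
  shows "\<exists>n. \<forall>z\<in>tail X n. y @ [z] \<in> losing_positions T X0 A v"
proof -
  have yT: "y \<in> T" and yv: "prefix v y" and yl: "\<not> I_wins_from T X0 A y"
    using y(1) unfolding losing_positions_def by auto
  obtain nT where nT: "\<forall>z\<in>tail V nT. y @ [z] \<in> T" using is_rule_far_moves[OF rule yT y(2)] by blast
  consider m where "tail X m \<inter> {x. y @ [x] \<in> T \<and> I_wins_from T X0 A (y @ [x])} = {}"
    | "\<forall>Y. block_subspace Y \<and> Y \<subseteq> X \<longrightarrow> Y \<inter> {x. y @ [x] \<in> T \<and> I_wins_from T X0 A (y @ [x])} \<noteq> {}"
    using dichotomy by blast
  then show ?thesis
  proof cases
    case (1 m)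
    have "y @ [z] \<in> losing_positions T X0 A v" if z: "z \<in> tail X (max m nT)" for z
    proof -
      have "z \<in> tail X m" "z \<in> tail V nT" using z XV unfolding tail_def by auto
      then have "y @ [z] \<in> T" "\<not> I_wins_from T X0 A (y @ [z])" using 1 nT by auto
      then show ?thesis using yv unfolding losing_positions_def by simp
    qed
    then show ?thesis by blast
  next
    case 2
    have "\<exists>x\<in>Z. x \<noteq> 0 \<and> I_wins_from T X A (y @ [x])" if Z: "block_subspace Z" "Z \<subseteq> X" for Z
    proof -
      obtain x where x: "x \<in> Z" "y @ [x] \<in> T" "I_wins_from T X0 A (y @ [x])" using 2 Z by blast
      have "block_list (y @ [x])" using rule x(2) unfolding is_rule_def by blast
      then have "x \<noteq> 0" unfolding block_list_def by simp
      then show ?thesis using x I_wins_from_mono[OF x(3) XV(1)] by blast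
    qed
    then have "I_wins_from T X A y" using I_wins_from_successors[of y T] y(2) yT by blast
    then have "I_wins_from T X0 A y" using decided X XV(1) by blast
    then show ?thesis using yl by blast
  qed
qed

lemma losing_positions_is_rule:
  assumes rule: "is_rule V v T" and XV: "X \<subseteq> X0" "X0 \<subseteq> V" and X: "block_subspace X"
    and decided: "\<forall>p W. block_subspace W \<and> W \<subseteq> X0 \<and> I_wins_from T W A p \<longrightarrow> I_wins_from T X0 A p"
    and dichotomy: "\<forall>p. (\<exists>m. tail X m \<inter> {x. p @ [x] \<in> T \<and> I_wins_from T X0 A (p @ [x])} = {}) \<or>
        (\<forall>Y. block_subspace Y \<and> Y \<subseteq> X \<longrightarrow> Y \<inter> {x. p @ [x] \<in> T \<and> I_wins_from T X0 A (p @ [x])} \<noteq> {})"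
    and v: "\<not> I_wins_from T X0 A v"
  shows "is_rule X v (losing_positions T X0 A v)"
  unfolding is_rule_def
proof (intro conjI ballI allI impI)
  show "v \<in> losing_positions T X0 A v"
    using rule v unfolding is_rule_def losing_positions_def by simp
  show "block_list y" if "y \<in> losing_positions T X0 A v" for y
    using rule that unfolding is_rule_def losing_positions_def by blast
  show "\<exists>z\<in>Z. y @ [z] \<in> losing_positions T X0 A v"
    if "y \<in> losing_positions T X0 A v" "odd (length y)" "block_subspace Z \<and> Z \<subseteq> X" for y Z
    using losing_positions_odd[OF decided] that XV by blast
  show "\<exists>n. \<forall>z\<in>tail X n. y @ [z] \<in> losing_positions T X0 A v"
    if "y \<in> losing_positions T X0 A v" "even (length y)" for y
    using losing_positions_even[OF rule XV decided X dichotomy[rule_format, of y] that] .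
qed

text \<open>No branch of the pruned rule runs through the interior of A: such a branch has a
  position all of whose continuations lie in A, and that position is trivially winning.\<close>
lemma losing_positions_body:
  assumes rule: "is_rule V v T" and X0V: "X0 \<subseteq> V"
  shows "body (losing_positions T X0 A v) \<inter> seq_interior A = {}"
proof (rule ccontr)
  let ?S = "losing_positions T X0 A v"
  assume "body ?S \<inter> seq_interior A \<noteq> {}"
  then obtain s where sb: "s \<in> body ?S" and si: "s \<in> seq_interior A" by blast
  obtain m where m: "\<forall>t. (\<forall>i<m. t i = s i) \<longrightarrow> t \<in> A" using si unfolding seq_interior_def by blast
  have "infinite {m. map s [0..<Suc m] \<in> ?S}" using sb unfolding body_def by blast
  then obtain m' where m': "m \<le> m'" "map s [0..<Suc m'] \<in> ?S"
    unfolding infinite_nat_iff_unbounded_le by blast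
  let ?p = "map s [0..<Suc m']"
  have pT: "?p \<in> T" and pl: "\<not> I_wins_from T X0 A ?p" using m'(2) unfolding losing_positions_def by auto
  have "t \<in> A" if "map t [0..<length ?p] = ?p" for t
  proof -
    have "map t [0..<Suc m'] = map s [0..<Suc m']" using that by simp
    then have "\<forall>i\<in>set [0..<Suc m']. t i = s i" by (simp only: map_eq_conv)
    then show ?thesis using m m'(1) by simp
  qed
  then have "I_wins_from T X0 A ?p" using I_wins_from_trivial[OF rule X0V pT] by blast
  then show False using pl by blast
qed

text \<open>A strategy for I in the pruned game would give one in the original game: when the play
  leaves the pruned rule it reaches a position winning for I in X0, hence in W.\<close>
lemma losing_positions_no_strategy:
  assumes WX0: "W \<subseteq> X0" and strategy: "I_has_strategy (losing_positions T X0 A v) W v A"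
  shows "I_has_strategy T W v A"
proof -
  obtain \<sigma>x \<sigma>n where st: "I_strategy_in (losing_positions T X0 A v) W v A \<sigma>x \<sigma>n"
    using strategy unfolding I_has_strategy_def by blast
  show ?thesis
  proof (rule has_strategy_switch[OF _ st])
    show "losing_positions T X0 A v \<subseteq> T" unfolding losing_positions_def by blast
    fix q assume "q \<in> T" "prefix v q" "q \<notin> losing_positions T X0 A v"
    then have "I_wins_from T X0 A q" unfolding losing_positions_def by blast
    then show "I_has_strategy T W q A" using I_wins_from_has_strategy I_wins_from_mono[OF _ WX0] by blast
  qed
qed

theorem mainTheorem7:
  fixes A :: "(nat \<Rightarrow> ('f::{field,countable}) vec) set"
    and V :: "'f vec set" and v :: "'f vec list" and T :: "'f vec list set"
  assumes "block_subspace V"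
    and "block_list v"
    and "is_rule V v T"
    and "\<forall>W. block_subspace W \<and> W \<subseteq> V \<longrightarrow> \<not> I_has_strategy T W v A"
  shows "\<exists>X S. block_subspace X \<and> X \<subseteq> V \<and> is_rule X v S \<and> S \<subseteq> T \<and>
           body S \<inter> seq_interior A = {} \<and>
           (\<forall>W. block_subspace W \<and> W \<subseteq> X \<longrightarrow> \<not> I_has_strategy S W v A)"
proof -
  note V = assms(1) and rule = assms(3) and no_strategy = assms(4)
  obtain X0 where X0: "block_subspace X0" "X0 \<subseteq> V"
    and decided: "\<forall>p W. block_subspace W \<and> W \<subseteq> X0 \<and> I_wins_from T W A p \<longrightarrow> I_wins_from T X0 A p"
    using decide_winning_positions[OF V, where T=T and A=A] by blast
  have v: "\<not> I_wins_from T X0 A v"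
    using I_wins_from_has_strategy no_strategy[rule_format, OF conjI[OF X0]] by blast
  obtain X where X: "block_subspace X" "X \<subseteq> X0"
    and dichotomy: "\<forall>p. (\<exists>m. tail X m \<inter> {x. p @ [x] \<in> T \<and> I_wins_from T X0 A (p @ [x])} = {}) \<or>
        (\<forall>Y. block_subspace Y \<and> Y \<subseteq> X \<longrightarrow> Y \<inter> {x. p @ [x] \<in> T \<and> I_wins_from T X0 A (p @ [x])} \<noteq> {})"
    using decide_vector_sets[OF X0(1), of "\<lambda>p. {x. p @ [x] \<in> T \<and> I_wins_from T X0 A (p @ [x])}"] by blast
  let ?S = "losing_positions T X0 A v"
  have "is_rule X v ?S" using losing_positions_is_rule[OF rule X(2) X0(2) X(1) decided dichotomy v] .
  moreover have "?S \<subseteq> T" unfolding losing_positions_def by blast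
  moreover have "body ?S \<inter> seq_interior A = {}" using losing_positions_body[OF rule X0(2)] .
  moreover have "\<not> I_has_strategy ?S W v A" if W: "block_subspace W" "W \<subseteq> X" for W
  proof
    assume "I_has_strategy ?S W v A"
    moreover have "W \<subseteq> X0" using W(2) X(2) by blast
    ultimately have "I_has_strategy T W v A" using losing_positions_no_strategy by blast
    moreover have "W \<subseteq> V" using W(2) X(2) X0(2) by blast
    ultimately show False using no_strategy W(1) by blast
  qed
  moreover have "X \<subseteq> V" using X(2) X0(2) by blast
  ultimately show ?thesis using X(1) by (intro exI[of _ X] exI[of _ ?S]) simp
qed

end
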